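(* Let $k \geq 100$ and $c > 1$ be fixed, let $G\sim G(n,\frac{c}{n})$, let $\widetilde{M}_k$ be a weighted ($k$th-)neighbourhood sum and let $\widehat{M}_k$ be its truncation. Then \[ \mathrm{Var}\left[\widetilde{M}_k - \widehat{M}_k\right] \leq n\exp\left(-c^2k^2\right) + O(1), \quad\text{as } n \rightarrow \infty. \]
   Context: $G(n,p)$ is the binomial random graph on $[n]$. $B_G(v,k)$ is the set of vertices at graph distance at most $k$ from $v$. A rooted graph $(H,r)$ is a graph with a distinguished vertex; $(H_1,r_1)\cong(H_2,r_2)$ means there is a graph isomorphism mapping $r_1$ to $r_2$. Let $\mathcal H$ be the set of (isomorphism classes of) rooted graphs $(H,r)$ of radius at most $k$ (all vertices within distance $k$ of $r$). A weighted neighbourhood sum is a random variable $\widetilde M_k=\sum_{v\in V(G)}\sum_{(H,r)\in\mathcal H}\beta_{(H,r)}\mathbf 1\{(G[B_G(v,k)],v)\cong(H,r)\}$, where $\beta_{(H,r)}\in[0,1]$ are constants depending only on $(H,r)$. Its truncation is $\widehat M_k=\sum_{v\in V(G)}\sum_{(T,r)\in\mathcal T}\beta_{(T,r)}\mathbf 1\{(G[B_G(v,k)],v)\cong(T,r)\}$, where $\mathcal T$ is the set of rooted trees $(T,r)\in\mathcal H$ with $1\le v(T)\le t_k\coloneqq(10ck)^{2k}$. *)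

theory Defs
  imports "HOL-Probability.Probability"
begin

definition graph :: "nat set \<Rightarrow> nat set set \<Rightarrow> bool" where
  "graph V E \<longleftrightarrow> finite V \<and> (\<forall>e\<in>E. e \<subseteq> V \<and> card e = 2)"

fun walk_le :: "nat set set \<Rightarrow> nat \<Rightarrow> nat \<Rightarrow> nat \<Rightarrow> bool" where
  "walk_le E 0 v u = (u = v)"
| "walk_le E (Suc m) v u = (walk_le E m v u \<or> (\<exists>w. walk_le E m v w \<and> {w, u} \<in> E))"

definition ball :: "nat set \<Rightarrow> nat set set \<Rightarrow> nat \<Rightarrow> nat \<Rightarrow> nat set" where
  "ball V E v k = {u \<in> V. walk_le E k v u}"

definition induced :: "nat set set \<Rightarrow> nat set \<Rightarrow> nat set set" where
  "induced E B = {e \<in> E. e \<subseteq> B}"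

definition rooted_iso ::
  "nat set \<Rightarrow> nat set set \<Rightarrow> nat \<Rightarrow> nat set \<Rightarrow> nat set set \<Rightarrow> nat \<Rightarrow> bool" where
  "rooted_iso V1 E1 r1 V2 E2 r2 \<longleftrightarrow>
     (\<exists>f. bij_betw f V1 V2 \<and> f r1 = r2 \<and>
          (\<forall>x\<in>V1. \<forall>y\<in>V1. {x, y} \<in> E1 \<longleftrightarrow> {f x, f y} \<in> E2))"

definition connected_graph :: "nat set \<Rightarrow> nat set set \<Rightarrow> bool" where
  "connected_graph V E \<longleftrightarrow> (\<forall>u\<in>V. \<forall>w\<in>V. \<exists>m. walk_le E m u w)"

definition has_cycle :: "nat set \<Rightarrow> nat set set \<Rightarrow> bool" where
  "has_cycle V E \<longleftrightarrow> (\<exists>xs. length xs \<ge> 3 \<and> distinct xs \<and> set xs \<subseteq> V \<and>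
      (\<forall>i. Suc i < length xs \<longrightarrow> {xs ! i, xs ! Suc i} \<in> E) \<and> {last xs, hd xs} \<in> E)"

definition is_tree :: "nat set \<Rightarrow> nat set set \<Rightarrow> bool" where
  "is_tree V E \<longleftrightarrow> V \<noteq> {} \<and> connected_graph V E \<and> \<not> has_cycle V E"

definition weight_fun :: "(nat set \<Rightarrow> nat set set \<Rightarrow> nat \<Rightarrow> real) \<Rightarrow> bool" where
  "weight_fun \<beta> \<longleftrightarrow>
     (\<forall>V E r. 0 \<le> \<beta> V E r \<and> \<beta> V E r \<le> 1) \<and>
     (\<forall>V1 E1 r1 V2 E2 r2. graph V1 E1 \<and> graph V2 E2 \<and> r1 \<in> V1 \<and> r2 \<in> V2 \<and>
          rooted_iso V1 E1 r1 V2 E2 r2 \<longrightarrow> \<beta> V1 E1 r1 = \<beta> V2 E2 r2)"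

definition all_pairs :: "nat \<Rightarrow> nat set set" where
  "all_pairs n = {{i, j} | i j. i < j \<and> j < n}"

definition gnp :: "nat \<Rightarrow> real \<Rightarrow> nat set set pmf" where
  "gnp n p = map_pmf (\<lambda>f. {e \<in> all_pairs n. f e})
                     (Pi_pmf (all_pairs n) False (\<lambda>_. bernoulli_pmf p))"

definition Mtilde :: "nat \<Rightarrow> (nat set \<Rightarrow> nat set set \<Rightarrow> nat \<Rightarrow> real) \<Rightarrow> nat \<Rightarrow> nat set set \<Rightarrow> real" where
  "Mtilde k \<beta> n E = (\<Sum>v<n. let B = ball {..<n} E v k in \<beta> B (induced E B) v)"

definition t_k :: "real \<Rightarrow> nat \<Rightarrow> real" where
  "t_k c k = (10 * c * real k) ^ (2 * k)"

definition Mhat :: "nat \<Rightarrow> real \<Rightarrow> (nat set \<Rightarrow> nat set set \<Rightarrow> nat \<Rightarrow> real) \<Rightarrow> nat \<Rightarrow> nat set set \<Rightarrow> real" where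
  "Mhat k c \<beta> n E = (\<Sum>v<n. let B = ball {..<n} E v k in
      if is_tree B (induced E B) \<and> 1 \<le> card B \<and> real (card B) \<le> t_k c k
      then \<beta> B (induced E B) v else 0)"

end

theory Submission
  imports Defs
begin

text \<open>By the Efron--Stein inequality for the independent edge indicators of \<open>G(n, c/n)\<close>, the
  variance is at most \<open>c/n\<close> times the sum, over the \<open>O(n\<^sup>2)\<close> potential edges \<open>{a, b}\<close>, of the
  expected squared change of \<open>Mtilde - Mhat\<close> when that edge is switched. Switching it only affects
  the truncation error at vertices within distance \<open>k\<close> of \<open>a\<close> or \<open>b\<close>. If all degrees within
  distance \<open>2k + 1\<close> of \<open>a\<close> are at most a cutoff \<open>d \<approx> 100 c\<^sup>2 k\<^sup>2\<close>, all these balls are smaller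
  than \<open>t_k\<close>, so a change needs a cycle near \<open>a\<close>; this gives a short path closed into a
  "lollipop", which has probability \<open>O(1/n)\<close> and so contributes \<open>O(1)\<close> to the variance.
  Otherwise the squared change is at most \<open>(1 + m) ^ (2 k + 2)\<close> for the largest degree \<open>m > d\<close> near
  \<open>a\<close>, an event of probability roughly \<open>c\<^sup>m / m!\<close>; summing over \<open>m\<close> gives \<open>n exp (- c\<^sup>2 k\<^sup>2)\<close>.\<close>

section \<open>Random subsets and the Efron--Stein inequality\<close>

text \<open>\<open>expect_subset A p g\<close> is the expectation of \<open>g\<close> at a random subset of \<open>A\<close> containing each
  element independently with probability \<open>p\<close>; for \<open>A = all_pairs n\<close> this is \<open>G(n, p)\<close>
  (\<open>expectation_gnp\<close>), and finite sums are much easier to induct on than the product measure.\<close>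
definition subset_weight :: "'a set \<Rightarrow> real \<Rightarrow> 'a set \<Rightarrow> real" where
  "subset_weight A p S = p ^ card S * (1 - p) ^ card (A - S)"

definition expect_subset :: "'a set \<Rightarrow> real \<Rightarrow> ('a set \<Rightarrow> real) \<Rightarrow> real" where
  "expect_subset A p g = (\<Sum>S\<in>Pow A. subset_weight A p S * g S)"

lemma expect_subset_empty [simp]: "expect_subset {} p g = g {}"
  unfolding expect_subset_def subset_weight_def by simp

lemma expect_subset_insert:
  assumes "finite A" "x \<notin> A"
  shows "expect_subset (insert x A) p g
       = (1 - p) * expect_subset A p g + p * expect_subset A p (\<lambda>S. g (insert x S))"
proof -
  have disj: "Pow A \<inter> insert x ` Pow A = {}" using assms by auto
  have inj: "inj_on (insert x) (Pow A)"
    using assms unfolding inj_on_def by (metis Pow_iff insert_ident subsetD)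
  have out: "subset_weight (insert x A) p S = (1 - p) * subset_weight A p S" if "S \<subseteq> A" for S
  proof -
    have "insert x A - S = insert x (A - S)" "finite (A - S)" using that assms by auto
    then show ?thesis using assms unfolding subset_weight_def by simp
  qed
  have inn: "subset_weight (insert x A) p (insert x S) = p * subset_weight A p S" if "S \<subseteq> A" for S
  proof -
    have "insert x A - insert x S = A - S" "finite S" "x \<notin> S"
      using that assms finite_subset by auto
    then show ?thesis unfolding subset_weight_def by simp
  qed
  have "expect_subset (insert x A) p g
      = (\<Sum>S\<in>Pow A. subset_weight (insert x A) p S * g S)
        + (\<Sum>S\<in>Pow A. subset_weight (insert x A) p (insert x S) * g (insert x S))"
    unfolding expect_subset_def Pow_insert using assms disj inj
    by (simp add: sum.union_disjoint sum.reindex)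
  also have "\<dots> = (1 - p) * expect_subset A p g + p * expect_subset A p (\<lambda>S. g (insert x S))"
    unfolding expect_subset_def sum_distrib_left
    by (intro arg_cong2[where f = "(+)"] sum.cong) (auto simp: out inn)
  finally show ?thesis .
qed

lemma expect_subset_cong:
  "(\<And>S. S \<subseteq> A \<Longrightarrow> f S = g S) \<Longrightarrow> expect_subset A p f = expect_subset A p g"
  unfolding expect_subset_def by (rule sum.cong) auto

lemma expect_subset_const: "finite A \<Longrightarrow> expect_subset A p (\<lambda>_. c) = c"
  by (induction A rule: finite_induct) (auto simp: expect_subset_insert algebra_simps)

lemma expect_subset_add:
  "expect_subset A p (\<lambda>S. f S + g S) = expect_subset A p f + expect_subset A p g"
  unfolding expect_subset_def by (simp add: algebra_simps sum.distrib)

lemma expect_subset_diff: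
  "expect_subset A p (\<lambda>S. f S - g S) = expect_subset A p f - expect_subset A p g"
  unfolding expect_subset_def by (simp add: algebra_simps sum_subtractf)

lemma expect_subset_cmult: "expect_subset A p (\<lambda>S. c * f S) = c * expect_subset A p f"
  unfolding expect_subset_def by (simp add: algebra_simps sum_distrib_left)

lemma expect_subset_sum:
  "finite I \<Longrightarrow> expect_subset A p (\<lambda>S. \<Sum>i\<in>I. f i S) = (\<Sum>i\<in>I. expect_subset A p (f i))"
  by (induction I rule: finite_induct) (auto simp: expect_subset_add expect_subset_def)

lemma expect_subset_mono:
  assumes "0 \<le> p" "p \<le> 1" "\<And>S. S \<subseteq> A \<Longrightarrow> f S \<le> g S"
  shows "expect_subset A p f \<le> expect_subset A p g"
  unfolding expect_subset_def subset_weight_def using assms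
  by (intro sum_mono mult_left_mono) auto

lemma expect_subset_nonneg:
  "0 \<le> p \<Longrightarrow> p \<le> 1 \<Longrightarrow> (\<And>S. S \<subseteq> A \<Longrightarrow> 0 \<le> f S) \<Longrightarrow> 0 \<le> expect_subset A p f"
  using expect_subset_mono[of p A "\<lambda>_. 0" f] unfolding expect_subset_def by simp

lemma expect_subset_centered_square:
  assumes "finite A"
  shows "expect_subset A p (\<lambda>S. (f S - m)\<^sup>2)
       = expect_subset A p (\<lambda>S. (f S)\<^sup>2) - 2 * m * expect_subset A p f + m\<^sup>2"
proof -
  have "(\<lambda>S. (f S - m)\<^sup>2) = (\<lambda>S. ((f S)\<^sup>2 + (- 2 * m) * f S) + m\<^sup>2)"
    by (auto simp: power2_eq_square algebra_simps)
  then show ?thesis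
    by (simp only: expect_subset_add expect_subset_cmult expect_subset_const[OF assms])
qed

lemma expect_subset_square_le:
  assumes "finite A" "0 \<le> p" "p \<le> 1"
  shows "(expect_subset A p f)\<^sup>2 \<le> expect_subset A p (\<lambda>S. (f S)\<^sup>2)"
proof -
  have "0 \<le> expect_subset A p (\<lambda>S. (f S - expect_subset A p f)\<^sup>2)"
    using assms by (intro expect_subset_nonneg) auto
  then show ?thesis
    unfolding expect_subset_centered_square[OF assms(1)] by (simp add: power2_eq_square)
qed

lemma expect_subset_superset:
  assumes "finite A" "F \<subseteq> A"
  shows "expect_subset A p (\<lambda>S. of_bool (F \<subseteq> S)) = p ^ card F"
  using assms
proof (induction A arbitrary: F rule: finite_induct)
  case (insert x A)
  show ?case
  proof (cases "x \<in> F")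
    case True
    have "finite F" using insert finite_subset by blast
    have "expect_subset A p (\<lambda>S. of_bool (F \<subseteq> S)) = expect_subset A p (\<lambda>_. 0)"
      using insert.hyps True by (intro expect_subset_cong) auto
    moreover have "expect_subset A p (\<lambda>S. of_bool (F \<subseteq> insert x S))
                 = expect_subset A p (\<lambda>S. of_bool (F - {x} \<subseteq> S))"
      using True insert.hyps by (intro expect_subset_cong) auto
    moreover have "expect_subset A p (\<lambda>S. of_bool (F - {x} \<subseteq> S)) = p ^ card (F - {x})"
      using insert by (intro insert.IH) auto
    ultimately show ?thesis
      unfolding expect_subset_insert[OF insert.hyps] using True \<open>finite F\<close> insert.hyps
      by (simp add: expect_subset_const del: card_Diff_insert add: card_Suc_Diff1[OF \<open>finite F\<close> True, symmetric])
  next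
    case False
    have "expect_subset A p (\<lambda>S. of_bool (F \<subseteq> insert x S))
        = expect_subset A p (\<lambda>S. of_bool (F \<subseteq> S))"
      using False by (intro expect_subset_cong) auto
    moreover have "expect_subset A p (\<lambda>S. of_bool (F \<subseteq> S)) = p ^ card F"
      using insert False by (intro insert.IH) auto
    ultimately show ?thesis unfolding expect_subset_insert[OF insert.hyps]
      by (simp add: algebra_simps)
  qed
qed simp

lemma expect_subset_superset_le:
  assumes "finite A" "0 \<le> p" "p \<le> 1"
  shows "expect_subset A p (\<lambda>S. of_bool (F \<subseteq> S)) \<le> p ^ card F"
proof (cases "F \<subseteq> A")
  case False
  then have "expect_subset A p (\<lambda>S. of_bool (F \<subseteq> S)) = expect_subset A p (\<lambda>S. 0)"
    by (intro expect_subset_cong) auto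
  then show ?thesis using assms by (simp add: expect_subset_const)
qed (use expect_subset_superset[OF assms(1)] in simp)

lemma expect_subset_indicator_le_sum:
  assumes "0 \<le> p" "p \<le> 1" "finite I" "\<And>S. S \<subseteq> A \<Longrightarrow> P S \<Longrightarrow> \<exists>i\<in>I. Q i S"
  shows "expect_subset A p (\<lambda>S. of_bool (P S)) \<le> (\<Sum>i\<in>I. expect_subset A p (\<lambda>S. of_bool (Q i S)))"
proof -
  have "expect_subset A p (\<lambda>S. of_bool (P S)) \<le> expect_subset A p (\<lambda>S. \<Sum>i\<in>I. of_bool (Q i S))"
  proof (rule expect_subset_mono[OF assms(1,2)])
    fix S assume "S \<subseteq> A"
    show "of_bool (P S) \<le> (\<Sum>i\<in>I. of_bool (Q i S) :: real)"
    proof (cases "P S")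
      case True
      then obtain i where "i \<in> I" "Q i S" using assms(4) \<open>S \<subseteq> A\<close> by blast
      then have "of_bool (Q i S) \<le> (\<Sum>i\<in>I. of_bool (Q i S) :: real)"
        by (intro member_le_sum) (use assms(3) in auto)
      then show ?thesis using True \<open>Q i S\<close> by simp
    qed (simp add: sum_nonneg)
  qed
  also have "\<dots> = (\<Sum>i\<in>I. expect_subset A p (\<lambda>S. of_bool (Q i S)))"
    by (rule expect_subset_sum[OF assms(3)])
  finally show ?thesis .
qed

lemma expect_subset_union_bound:
  assumes "finite A" "0 \<le> p" "p \<le> 1" "finite I"
    and "\<And>S. S \<subseteq> A \<Longrightarrow> P S \<Longrightarrow> \<exists>i\<in>I. F i \<subseteq> S"
  shows "expect_subset A p (\<lambda>S. of_bool (P S)) \<le> (\<Sum>i\<in>I. p ^ card (F i))"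
proof -
  have "expect_subset A p (\<lambda>S. of_bool (P S)) \<le> (\<Sum>i\<in>I. expect_subset A p (\<lambda>S. of_bool (F i \<subseteq> S)))"
    by (rule expect_subset_indicator_le_sum[OF assms(2-5)])
  also have "\<dots> \<le> (\<Sum>i\<in>I. p ^ card (F i))"
    by (rule sum_mono) (rule expect_subset_superset_le[OF assms(1-3)])
  finally show ?thesis .
qed

text \<open>Induction on the ground set: conditioning on the last element splits the variance into the
  two conditional variances plus \<open>p (1 - p)\<close> times the squared difference of the conditional
  means, which is at most the influence of that element.\<close>
lemma efron_stein:
  assumes "finite A" "0 \<le> p" "p \<le> 1"
  shows "expect_subset A p (\<lambda>S. (f S)\<^sup>2) - (expect_subset A p f)\<^sup>2
     \<le> p * (1 - p) * (\<Sum>i\<in>A. expect_subset A p (\<lambda>S. (f (insert i S) - f (S - {i}))\<^sup>2))"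
  using assms(1)
proof (induction A arbitrary: f rule: finite_induct)
  case empty
  then show ?case by (simp add: expect_subset_def subset_weight_def)
next
  case (insert x A)
  let ?E = "expect_subset A p"
  let ?Var = "\<lambda>f. ?E (\<lambda>S. (f S)\<^sup>2) - (?E f)\<^sup>2"
  let ?Inf = "\<lambda>f i. ?E (\<lambda>S. (f (insert i S) - f (S - {i}))\<^sup>2)"
  define f1 where "f1 = (\<lambda>S. f (insert x S))"
  have mean_diff: "(?E f - ?E f1)\<^sup>2 \<le> ?E (\<lambda>S. (f S - f1 S)\<^sup>2)"
    using expect_subset_square_le[OF insert.hyps(1) assms(2,3), of "\<lambda>S. f S - f1 S"]
    by (simp only: expect_subset_diff)
  have split: "expect_subset (insert x A) p (\<lambda>S. (f S)\<^sup>2) - (expect_subset (insert x A) p f)\<^sup>2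
      = (1 - p) * ?Var f + p * ?Var f1 + p * (1 - p) * (?E f - ?E f1)\<^sup>2"
    unfolding expect_subset_insert[OF insert.hyps] f1_def
    by (simp add: power2_eq_square algebra_simps)
  have inf_x: "expect_subset (insert x A) p (\<lambda>S. (f (insert x S) - f (S - {x}))\<^sup>2)
      = ?E (\<lambda>S. (f S - f1 S)\<^sup>2)"
  proof -
    have "S - {x} = S" "insert x S - {x} = S" if "S \<subseteq> A" for S
      using that insert.hyps by auto
    then have "?E (\<lambda>S. (f (insert x S) - f (S - {x}))\<^sup>2) = ?E (\<lambda>S. (f S - f1 S)\<^sup>2)"
      "?E (\<lambda>S. (f (insert x (insert x S)) - f (insert x S - {x}))\<^sup>2) = ?E (\<lambda>S. (f S - f1 S)\<^sup>2)"
      unfolding f1_def by (auto intro!: expect_subset_cong simp: power2_commute)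
    then show ?thesis unfolding expect_subset_insert[OF insert.hyps] by (simp add: algebra_simps)
  qed
  have inf_i: "expect_subset (insert x A) p (\<lambda>S. (f (insert i S) - f (S - {i}))\<^sup>2)
      = (1 - p) * ?Inf f i + p * ?Inf f1 i" if "i \<in> A" for i
  proof -
    have "i \<noteq> x" using that insert.hyps by auto
    then have "\<And>S. insert x S - {i} = insert x (S - {i})"
      "\<And>S. insert i (insert x S) = insert x (insert i S)" by auto
    then show ?thesis unfolding expect_subset_insert[OF insert.hyps] f1_def by simp
  qed
  have "expect_subset (insert x A) p (\<lambda>S. (f S)\<^sup>2) - (expect_subset (insert x A) p f)\<^sup>2
     \<le> (1 - p) * (p * (1 - p) * (\<Sum>i\<in>A. ?Inf f i)) + p * (p * (1 - p) * (\<Sum>i\<in>A. ?Inf f1 i))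
       + p * (1 - p) * ?E (\<lambda>S. (f S - f1 S)\<^sup>2)"
    unfolding split using assms by (intro add_mono mult_left_mono insert.IH mean_diff) auto
  also have "\<dots> = p * (1 - p) * (?E (\<lambda>S. (f S - f1 S)\<^sup>2)
      + ((1 - p) * (\<Sum>i\<in>A. ?Inf f i) + p * (\<Sum>i\<in>A. ?Inf f1 i)))"
    by (simp add: algebra_simps)
  also have "(1 - p) * (\<Sum>i\<in>A. ?Inf f i) + p * (\<Sum>i\<in>A. ?Inf f1 i)
      = (\<Sum>i\<in>A. (1 - p) * ?Inf f i + p * ?Inf f1 i)"
    by (simp add: sum.distrib sum_distrib_left)
  also have "\<dots> = (\<Sum>i\<in>A. expect_subset (insert x A) p (\<lambda>S. (f (insert i S) - f (S - {i}))\<^sup>2))"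
    by (rule sum.cong) (simp_all add: inf_i)
  also have "?E (\<lambda>S. (f S - f1 S)\<^sup>2) + \<dots>
      = (\<Sum>i\<in>insert x A. expect_subset (insert x A) p (\<lambda>S. (f (insert i S) - f (S - {i}))\<^sup>2))"
    using insert.hyps by (simp add: inf_x)
  finally show ?case .
qed

lemma expectation_random_subset:
  assumes "finite A" "0 \<le> p" "p \<le> 1"
  shows "measure_pmf.expectation
           (map_pmf (\<lambda>f. {e \<in> A. f e}) (Pi_pmf A False (\<lambda>_. bernoulli_pmf p))) g
       = expect_subset A p g"
proof -
  let ?M = "Pi_pmf A False (\<lambda>_. bernoulli_pmf p)"
  let ?F = "\<lambda>f. {e \<in> A. f e}"
  let ?Fs = "(\<lambda>S e. e \<in> S) ` Pow A"
  have "measure_pmf.expectation (map_pmf ?F ?M) g = (\<Sum>h\<in>?Fs. g (?F h) * pmf ?M h)"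
    unfolding integral_map_pmf
  proof (rule integral_measure_pmf_real)
    fix h assume "h \<in> set_pmf ?M"
    then have "\<forall>x. x \<notin> A \<longrightarrow> h x = False"
      using set_Pi_pmf_subset[OF assms(1), of False "\<lambda>_. bernoulli_pmf p"] by blast
    then have "h = (\<lambda>e. e \<in> ?F h)" by auto
    then show "h \<in> ?Fs" by blast
  qed (use assms in simp)
  also have "\<dots> = (\<Sum>S\<in>Pow A. g (?F (\<lambda>e. e \<in> S)) * pmf ?M (\<lambda>e. e \<in> S))"
  proof (rule sum.reindex_cong[where l = "\<lambda>S e. e \<in> S"])
    show "inj_on (\<lambda>S e. e \<in> S) (Pow A)" unfolding inj_on_def by (metis Collect_mem_eq)
  qed auto
  also have "\<dots> = expect_subset A p g"
    unfolding expect_subset_def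
  proof (rule sum.cong)
    fix S assume S: "S \<in> Pow A"
    have "pmf ?M (\<lambda>e. e \<in> S) = (\<Prod>x\<in>A. pmf (bernoulli_pmf p) (x \<in> S))"
      using S by (subst pmf_Pi') (use assms in auto)
    also have "\<dots> = (\<Prod>x\<in>A. if x \<in> S then p else 1 - p)"
      using assms by (intro prod.cong) auto
    also have "\<dots> = (\<Prod>x\<in>A \<inter> {x. x \<in> S}. p) * (\<Prod>x\<in>A \<inter> - {x. x \<in> S}. 1 - p)"
      by (rule prod.If_cases) (use assms in auto)
    also have "\<dots> = subset_weight A p S"
      unfolding subset_weight_def using S by (simp add: Int_absorb1 Diff_eq)
    finally have "pmf ?M (\<lambda>e. e \<in> S) = subset_weight A p S" .
    moreover have "?F (\<lambda>e. e \<in> S) = S" using S by auto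
    ultimately show "g (?F (\<lambda>e. e \<in> S)) * pmf ?M (\<lambda>e. e \<in> S) = subset_weight A p S * g S"
      by simp
  qed simp
  finally show ?thesis .
qed

lemma finite_all_pairs: "finite (all_pairs n)"
  by (rule finite_subset[of _ "Pow {..<n}"]) (auto simp: all_pairs_def)

lemma card_all_pairs: "card (all_pairs n) \<le> n * n"
proof -
  have "all_pairs n \<subseteq> (\<lambda>(i, j). {i, j}) ` ({..<n} \<times> {..<n})"
    unfolding all_pairs_def by auto
  then have "card (all_pairs n) \<le> card ((\<lambda>(i, j). {i, j}) ` ({..<n} \<times> {..<n}))"
    by (intro card_mono) auto
  also have "\<dots> \<le> card ({..<n} \<times> {..<n})" by (rule card_image_le) simp
  finally show ?thesis by (simp add: card_cartesian_product)
qed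

lemma expectation_gnp:
  "0 \<le> p \<Longrightarrow> p \<le> 1 \<Longrightarrow>
     measure_pmf.expectation (gnp n p) g = expect_subset (all_pairs n) p g"
  unfolding gnp_def by (rule expectation_random_subset[OF finite_all_pairs])

lemma variance_gnp_le:
  assumes "0 \<le> p" "p \<le> 1"
  shows "measure_pmf.variance (gnp n p) f
     \<le> p * (1 - p) * (\<Sum>i\<in>all_pairs n.
          expect_subset (all_pairs n) p (\<lambda>S. (f (insert i S) - f (S - {i}))\<^sup>2))"
proof -
  let ?E = "expect_subset (all_pairs n) p"
  have "measure_pmf.variance (gnp n p) f = ?E (\<lambda>S. (f S - ?E f)\<^sup>2)"
    by (simp add: expectation_gnp[OF assms])
  also have "\<dots> = ?E (\<lambda>S. (f S)\<^sup>2) - (?E f)\<^sup>2"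
    unfolding expect_subset_centered_square[OF finite_all_pairs] by (simp add: power2_eq_square)
  finally show ?thesis using efron_stein[OF finite_all_pairs assms] by simp
qed

section \<open>Walks, balls and cycles\<close>

lemma all_pairs_mem: "{x, y} \<in> all_pairs n \<Longrightarrow> x < n \<and> y < n \<and> x \<noteq> y"
  unfolding all_pairs_def by (auto simp: doubleton_eq_iff)

lemma walk_le_mono: "walk_le E r v u \<Longrightarrow> r \<le> r' \<Longrightarrow> walk_le E r' v u"
proof (induction r' arbitrary: r)
  case 0 then show ?case by simp
next
  case (Suc r')
  then show ?case by (cases "r = Suc r'") auto
qed

lemma walk_le_mono_edges: "walk_le E r v u \<Longrightarrow> E \<subseteq> E' \<Longrightarrow> walk_le E' r v u"
  by (induction r arbitrary: u) auto

lemma walk_le_trans: "walk_le E r1 x y \<Longrightarrow> walk_le E r2 y z \<Longrightarrow> walk_le E (r1 + r2) x z"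
proof (induction r2 arbitrary: z)
  case 0 then show ?case by simp
next
  case (Suc r2)
  from Suc.prems(2) have "walk_le E r2 y z \<or> (\<exists>w. walk_le E r2 y w \<and> {w, z} \<in> E)" by simp
  then show ?case
  proof (elim disjE)
    assume "walk_le E r2 y z" then show ?thesis using Suc by simp
  next
    assume "\<exists>w. walk_le E r2 y w \<and> {w, z} \<in> E"
    then obtain w where "walk_le E r2 y w" "{w, z} \<in> E" by blast
    then show ?thesis using Suc.IH[of w] Suc.prems(1) by auto
  qed
qed

lemma walk_le_sym: "walk_le E r x y \<Longrightarrow> walk_le E r y x"
proof (induction r arbitrary: y)
  case 0 then show ?case by simp
next
  case (Suc r)
  from Suc.prems[simplified] show ?case
  proof (elim disjE)
    assume "walk_le E r x y" then show ?thesis using Suc.IH by simp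
  next
    assume "\<exists>w. walk_le E r x w \<and> {w, y} \<in> E"
    then obtain w where w: "walk_le E r x w" "{w, y} \<in> E" by blast
    have "{y, w} \<in> E" using w(2) by (simp add: insert_commute)
    then have "walk_le E 1 y w" by simp
    from walk_le_trans[OF this Suc.IH[OF w(1)]] show ?thesis by simp
  qed
qed

fun is_walk :: "nat set set \<Rightarrow> nat list \<Rightarrow> bool" where
  "is_walk E (x # y # zs) = ({x, y} \<in> E \<and> is_walk E (y # zs))"
| "is_walk E _ = True"

lemma is_walk_Cons:
  "is_walk E (x # xs) \<longleftrightarrow> is_walk E xs \<and> (xs \<noteq> [] \<longrightarrow> {x, hd xs} \<in> E)"
  by (cases xs) auto

lemma is_walk_append:
  "is_walk E (xs @ ys)
     \<longleftrightarrow> is_walk E xs \<and> is_walk E ys \<and> (xs \<noteq> [] \<and> ys \<noteq> [] \<longrightarrow> {last xs, hd ys} \<in> E)"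
  by (induction xs) (auto simp: is_walk_Cons)

lemma is_walk_nth: "is_walk E xs \<longleftrightarrow> (\<forall>i. Suc i < length xs \<longrightarrow> {xs ! i, xs ! Suc i} \<in> E)"
  by (induction E xs rule: is_walk.induct) (auto simp: nth_Cons split: nat.splits)

lemma is_walk_mono: "is_walk E xs \<Longrightarrow> E \<subseteq> E' \<Longrightarrow> is_walk E' xs"
  by (induction E xs rule: is_walk.induct) auto

lemma is_walk_imp_walk_le: "is_walk E xs \<Longrightarrow> xs \<noteq> [] \<Longrightarrow> walk_le E (length xs - 1) (hd xs) (last xs)"
proof (induction xs)
  case Nil then show ?case by simp
next
  case (Cons x xs)
  show ?case
  proof (cases xs)
    case Nil then show ?thesis by simp
  next
    case (Cons y ys)
    have "walk_le E 1 x (hd xs)" using Cons.prems Cons by simp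
    moreover have "walk_le E (length xs - 1) (hd xs) (last xs)"
      using Cons.IH Cons.prems Cons by (simp add: is_walk_Cons)
    ultimately have "walk_le E (1 + (length xs - 1)) x (last xs)" by (rule walk_le_trans)
    then show ?thesis using Cons by simp
  qed
qed

lemma walk_le_imp_path:
  assumes "walk_le E r x u"
  shows "\<exists>xs. xs \<noteq> [] \<and> hd xs = x \<and> last xs = u \<and> length xs \<le> Suc r \<and> distinct xs \<and> is_walk E xs"
  using assms
proof (induction r arbitrary: u)
  case 0 then show ?case by (intro exI[of _ "[x]"]) simp
next
  case (Suc r)
  from Suc.prems[simplified] show ?case
  proof (elim disjE)
    assume "walk_le E r x u"
    then show ?thesis using Suc.IH by (meson le_Suc_eq)
  next
    assume "\<exists>w. walk_le E r x w \<and> {w, u} \<in> E"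
    then obtain w where w: "walk_le E r x w" "{w, u} \<in> E" by blast
    obtain ys where ys: "ys \<noteq> []" "hd ys = x" "last ys = w" "length ys \<le> Suc r" "distinct ys"
        "is_walk E ys"
      using Suc.IH[OF w(1)] by blast
    show ?thesis
    proof (cases "u \<in> set ys")
      case True
      then obtain as bs where ab: "ys = as @ u # bs" by (meson split_list)
      have "is_walk E (as @ [u])" using ys(6) unfolding ab by (simp add: is_walk_append)
      moreover have "hd (as @ [u]) = x" using ys(2) ab by (cases as) auto
      moreover have "distinct (as @ [u])" using ys(5) ab by auto
      moreover have "length (as @ [u]) \<le> Suc (Suc r)" using ys(4) ab by auto
      ultimately show ?thesis by (intro exI[of _ "as @ [u]"]) auto
    next
      case False
      have "is_walk E (ys @ [u])" using ys w(2) by (simp add: is_walk_append)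
      moreover have "hd (ys @ [u]) = x" using ys by simp
      moreover have "distinct (ys @ [u])" using ys(5) False by auto
      moreover have "length (ys @ [u]) \<le> Suc (Suc r)" using ys(4) by auto
      ultimately show ?thesis by (intro exI[of _ "ys @ [u]"]) auto
    qed
  qed
qed

lemma walk_le_insert_edge:
  assumes "walk_le (insert {a, b} S) r x u"
  shows "walk_le S r x u \<or> walk_le S r a u \<or> walk_le S r b u"
  using assms
proof (induction r arbitrary: u)
  case (Suc r)
  from Suc.prems[unfolded walk_le.simps] show ?case
  proof (elim disjE exE conjE)
    assume "walk_le (insert {a, b} S) r x u"
    then show ?thesis using Suc.IH by auto
  next
    fix w assume w: "walk_le (insert {a, b} S) r x w" "{w, u} \<in> insert {a, b} S"
    show ?thesis
    proof (cases "{w, u} \<in> S")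
      case True
      then show ?thesis using Suc.IH[OF w(1)] by auto
    next
      case False
      then have "u = a \<or> u = b" using w(2) by (auto simp: doubleton_eq_iff)
      moreover have "walk_le S (Suc r) u u" using walk_le_mono[of S 0 u u "Suc r"] by simp
      ultimately show ?thesis by auto
    qed
  qed
qed simp

definition neighbours :: "nat \<Rightarrow> nat set set \<Rightarrow> nat \<Rightarrow> nat set" where
  "neighbours n E u = {w \<in> {..<n}. {u, w} \<in> E}"

definition degree :: "nat \<Rightarrow> nat set set \<Rightarrow> nat \<Rightarrow> nat" where
  "degree n E u = card (neighbours n E u)"

lemma degree_le: "degree n E u \<le> n"
proof -
  have "card (neighbours n E u) \<le> card {..<n}" by (rule card_mono) (auto simp: neighbours_def)
  then show ?thesis by (simp add: degree_def)
qed

lemma degree_insert_le: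
  assumes "a \<noteq> b"
  shows "degree n (insert {a, b} S) u \<le> degree n S u + 1"
proof -
  let ?v = "if u = a then b else a"
  have "neighbours n (insert {a, b} S) u \<subseteq> insert ?v (neighbours n S u)"
    using assms unfolding neighbours_def by (auto simp: doubleton_eq_iff)
  then have "degree n (insert {a, b} S) u \<le> card (insert ?v (neighbours n S u))"
    unfolding degree_def by (intro card_mono) (auto simp: neighbours_def)
  also have "\<dots> \<le> degree n S u + 1"
    unfolding degree_def neighbours_def by (simp add: card_insert_if)
  finally show ?thesis .
qed

lemma ball_mono_radius: "r \<le> r' \<Longrightarrow> ball V E x r \<subseteq> ball V E x r'"
  unfolding ball_def using walk_le_mono by blast

lemma ball_mono_edges: "E \<subseteq> E' \<Longrightarrow> ball V E x r \<subseteq> ball V E' x r"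
  unfolding ball_def using walk_le_mono_edges by blast

lemma ball_zero: "x \<in> V \<Longrightarrow> ball V E x 0 = {x}"
  unfolding ball_def by auto

lemma ball_Suc_subset:
  assumes "E \<subseteq> all_pairs n"
  shows "ball {..<n} E x (Suc r) \<subseteq> ball {..<n} E x r \<union> (\<Union>w\<in>ball {..<n} E x r. neighbours n E w)"
proof -
  have e: "\<And>w u. {w, u} \<in> E \<Longrightarrow> w < n" using assms all_pairs_mem by blast
  show ?thesis unfolding ball_def neighbours_def using e by auto
qed

lemma card_ball_le:
  assumes "x < n" "\<forall>u\<in>ball {..<n} E x R. degree n E u \<le> d" "r \<le> R" and E: "E \<subseteq> all_pairs n"
  shows "card (ball {..<n} E x r) \<le> (1 + d) ^ r"
  using assms(3)
proof (induction r)
  case 0 then show ?case using assms(1) by (simp add: ball_zero)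
next
  case (Suc r)
  let ?B = "ball {..<n} E x r"
  have fin: "finite ?B" unfolding ball_def by simp
  have "card (ball {..<n} E x (Suc r)) \<le> card (?B \<union> (\<Union>w\<in>?B. neighbours n E w))"
    by (rule card_mono[OF _ ball_Suc_subset[OF E]]) (use fin in \<open>auto simp: neighbours_def\<close>)
  also have "\<dots> \<le> card ?B + card (\<Union>w\<in>?B. neighbours n E w)" by (rule card_Un_le)
  also have "card (\<Union>w\<in>?B. neighbours n E w) \<le> (\<Sum>w\<in>?B. card (neighbours n E w))"
    by (rule card_UN_le[OF fin])
  also have "\<dots> \<le> (\<Sum>w\<in>?B. d)"
  proof (rule sum_mono)
    fix w assume "w \<in> ?B"
    then have "w \<in> ball {..<n} E x R" using ball_mono_radius[of r R] Suc.prems by auto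
    then show "card (neighbours n E w) \<le> d" using assms(2) by (simp add: degree_def)
  qed
  also have "\<dots> = card ?B * d" by simp
  finally have "card (ball {..<n} E x (Suc r)) \<le> card ?B * (1 + d)" by (simp add: algebra_simps)
  also have "\<dots> \<le> (1 + d) ^ r * (1 + d)" using Suc by (intro mult_right_mono) auto
  finally show ?case by (simp add: algebra_simps)
qed

definition is_closed_walk :: "nat set set \<Rightarrow> nat list \<Rightarrow> bool" where
  "is_closed_walk H cs \<longleftrightarrow> is_walk H cs \<and> {last cs, hd cs} \<in> H"

lemma has_cycle_iff:
  "has_cycle V E \<longleftrightarrow> (\<exists>cs. 3 \<le> length cs \<and> distinct cs \<and> set cs \<subseteq> V \<and> is_closed_walk E cs)"
  unfolding has_cycle_def is_closed_walk_def is_walk_nth by blast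

lemma is_closed_walk_rotate1: assumes c: "is_closed_walk H cs" shows "is_closed_walk H (rotate1 cs)"
proof (cases cs)
  case Nil then show ?thesis using c by simp
next
  case (Cons x xs)
  show ?thesis
  proof (cases xs)
    case Nil then show ?thesis using c Cons by simp
  next
    case (Cons y ys)
    have a1: "is_walk H (x # xs)" "{last (x # xs), x} \<in> H"
      using c \<open>cs = x # xs\<close> by (auto simp: is_closed_walk_def)
    have "is_walk H xs" "{x, hd xs} \<in> H" using a1(1) Cons by auto
    moreover have "last xs = last (x # xs)" using Cons by simp
    ultimately have "is_walk H (xs @ [x])"
      using a1(2) is_walk_append[of H xs "[x]"] by simp
    moreover have "{last (xs @ [x]), hd (xs @ [x])} \<in> H" using \<open>{x, hd xs} \<in> H\<close> Cons by simp
    ultimately show ?thesis using \<open>cs = x # xs\<close> by (simp add: is_closed_walk_def)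
  qed
qed

lemma is_closed_walk_rotate: "is_closed_walk H cs \<Longrightarrow> is_closed_walk H (rotate m cs)"
  by (induction m) (auto simp: is_closed_walk_rotate1)

lemma is_closed_walk_mono: "is_closed_walk E cs \<Longrightarrow> E \<subseteq> E' \<Longrightarrow> is_closed_walk E' cs"
  unfolding is_closed_walk_def using is_walk_mono by blast

lemma is_walk_take: "is_walk E xs \<Longrightarrow> is_walk E (take k xs)"
  using is_walk_append[of E "take k xs" "drop k xs"] by simp

lemma is_walk_set_subset:
  assumes "is_walk H xs" "H \<subseteq> all_pairs n" "xs \<noteq> []" "hd xs < n"
  shows "set xs \<subseteq> {..<n}"
  using assms
proof (induction H xs rule: is_walk.induct)
  case (1 E x y zs)
  then have "{x, y} \<in> all_pairs n" by auto
  then have "y < n" using all_pairs_mem by blast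
  then show ?case using 1 by auto
qed auto

lemma walk_in_induced:
  assumes G: "G \<subseteq> all_pairs n" and "walk_le G r v u" "r \<le> k" "u < n"
  shows "walk_le (induced G (ball {..<n} G v k)) r v u"
  using assms(2-4)
proof (induction r arbitrary: u)
  case 0 then show ?case by simp
next
  case (Suc r)
  let ?B = "ball {..<n} G v k"
  from Suc.prems(1) have "walk_le G r v u \<or> (\<exists>w. walk_le G r v w \<and> {w, u} \<in> G)" by simp
  then show ?case
  proof (elim disjE exE conjE)
    assume "walk_le G r v u" then show ?thesis using Suc by simp
  next
    fix w assume w: "walk_le G r v w" "{w, u} \<in> G"
    have wn: "w < n" using all_pairs_mem[of w u n] G w(2) by blast
    have IH: "walk_le (induced G ?B) r v w" using Suc.IH[OF w(1) _ wn] Suc.prems by simp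
    have "w \<in> ?B" using w(1) wn Suc.prems walk_le_mono[of G r v w k] unfolding ball_def by auto
    moreover have "u \<in> ?B" using Suc.prems walk_le_mono[of G "Suc r" v u k] unfolding ball_def by auto
    ultimately have "{w, u} \<in> induced G ?B" using w(2) unfolding induced_def by auto
    then show ?thesis using IH by auto
  qed
qed

lemma ball_connected:
  assumes G: "G \<subseteq> all_pairs n"
  shows "connected_graph (ball {..<n} G v k) (induced G (ball {..<n} G v k))"
  unfolding connected_graph_def
proof (intro ballI)
  fix u w assume u: "u \<in> ball {..<n} G v k" and w: "w \<in> ball {..<n} G v k"
  have "walk_le (induced G (ball {..<n} G v k)) k v u"
    using walk_in_induced[OF G, of k v u k] u unfolding ball_def by auto
  moreover have "walk_le (induced G (ball {..<n} G v k)) k v w"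
    using walk_in_induced[OF G, of k v w k] w unfolding ball_def by auto
  ultimately have "walk_le (induced G (ball {..<n} G v k)) (k + k) u w"
    using walk_le_trans walk_le_sym by blast
  then show "\<exists>m. walk_le (induced G (ball {..<n} G v k)) m u w" by blast
qed

lemma finite_ball: "finite (ball {..<n} G v k)"
  unfolding ball_def by simp

lemma ball_center: "v < n \<Longrightarrow> v \<in> ball {..<n} G v k"
  unfolding ball_def using walk_le_mono[of G 0 v v k] by simp

lemma ball_not_tree_imp_cycle:
  assumes G: "G \<subseteq> all_pairs n" and v: "v < n"
    and nt: "\<not> is_tree (ball {..<n} G v k) (induced G (ball {..<n} G v k))"
  shows "has_cycle (ball {..<n} G v k) (induced G (ball {..<n} G v k))"
  using nt ball_connected[OF G] ball_center[OF v] unfolding is_tree_def by blast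

lemma walk_le_remove_far_edge:
  assumes "walk_le H r v u" "r \<le> k" "\<not> walk_le H k v a" "\<not> walk_le H k v b"
  shows "walk_le (H - {{a, b}}) r v u"
  using assms(1,2)
proof (induction r arbitrary: u)
  case (Suc r)
  from Suc.prems(1)[unfolded walk_le.simps] show ?case
  proof (elim disjE exE conjE)
    assume "walk_le H r v u" then show ?thesis using Suc by simp
  next
    fix w assume w: "walk_le H r v w" "{w, u} \<in> H"
    have "walk_le H k v w" using w(1) Suc.prems(2) walk_le_mono by simp
    then have "w \<noteq> a" "w \<noteq> b" using assms(3,4) by auto
    then have "{w, u} \<in> H - {{a, b}}" using w(2) by (auto simp: doubleton_eq_iff)
    then show ?thesis using Suc.IH[OF w(1)] Suc.prems(2) by auto
  qed
qed simp

lemma ball_remove_far_edge: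
  assumes "\<not> walk_le H k v a" "\<not> walk_le H k v b"
  shows "ball {..<n} (H - {{a, b}}) v k = ball {..<n} H v k"
    and "induced (H - {{a, b}}) (ball {..<n} H v k) = induced H (ball {..<n} H v k)"
proof -
  show "ball {..<n} (H - {{a, b}}) v k = ball {..<n} H v k"
    using walk_le_remove_far_edge[OF _ _ assms] walk_le_mono_edges[of "H - {{a, b}}"]
    unfolding ball_def by blast
  have "a \<notin> ball {..<n} H v k" using assms(1) unfolding ball_def by auto
  then show "induced (H - {{a, b}}) (ball {..<n} H v k) = induced H (ball {..<n} H v k)"
    unfolding induced_def by auto
qed

section \<open>Locality of the truncation error\<close>

definition small_tree_ball :: "nat \<Rightarrow> real \<Rightarrow> nat \<Rightarrow> nat set set \<Rightarrow> nat \<Rightarrow> bool" where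
  "small_tree_ball k c n G v \<longleftrightarrow> (let B = ball {..<n} G v k in
      is_tree B (induced G B) \<and> 1 \<le> card B \<and> real (card B) \<le> t_k c k)"

definition truncation_error ::
  "nat \<Rightarrow> real \<Rightarrow> (nat set \<Rightarrow> nat set set \<Rightarrow> nat \<Rightarrow> real) \<Rightarrow> nat \<Rightarrow> nat set set \<Rightarrow> nat \<Rightarrow> real"
  where "truncation_error k c \<beta> n G v =
    (if small_tree_ball k c n G v then 0 else let B = ball {..<n} G v k in \<beta> B (induced G B) v)"

lemma Mtilde_minus_Mhat:
  "Mtilde k \<beta> n G - Mhat k c \<beta> n G = (\<Sum>v<n. truncation_error k c \<beta> n G v)"
  unfolding Mtilde_def Mhat_def truncation_error_def small_tree_ball_def sum_subtractf[symmetric]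
  by (rule sum.cong) (auto simp: Let_def)

lemma truncation_error_small_tree:
  "small_tree_ball k c n G v \<Longrightarrow> truncation_error k c \<beta> n G v = 0"
  unfolding truncation_error_def by simp

lemma truncation_error_bounds:
  "weight_fun \<beta> \<Longrightarrow> 0 \<le> truncation_error k c \<beta> n G v \<and> truncation_error k c \<beta> n G v \<le> 1"
  unfolding weight_fun_def truncation_error_def by (simp add: Let_def)

lemma truncation_error_remove_far_edge:
  assumes "\<not> walk_le H k v a" "\<not> walk_le H k v b"
  shows "truncation_error k c \<beta> n (H - {{a, b}}) v = truncation_error k c \<beta> n H v"
  using ball_remove_far_edge[OF assms, of n]
  unfolding truncation_error_def small_tree_ball_def by (simp add: Let_def)

text \<open>A path from \<open>a\<close> whose last vertex is also adjacent to an earlier, non-consecutive vertex: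
  the shape every cycle near \<open>a\<close> produces, and one whose probability is easy to bound.\<close>
definition has_lollipop :: "nat \<Rightarrow> nat set set \<Rightarrow> nat \<Rightarrow> nat \<Rightarrow> bool" where
  "has_lollipop n H a L \<longleftrightarrow> (\<exists>ys i. ys \<noteq> [] \<and> distinct ys \<and> hd ys = a \<and> is_walk H ys \<and>
      set ys \<subseteq> {..<n} \<and> i + 2 < length ys \<and> {last ys, ys ! i} \<in> H \<and> length ys \<le> L)"

definition has_heavy_vertex :: "nat \<Rightarrow> nat set set \<Rightarrow> nat \<Rightarrow> nat \<Rightarrow> nat \<Rightarrow> bool" where
  "has_heavy_vertex n H a R m \<longleftrightarrow> (\<exists>u\<in>ball {..<n} H a R. m \<le> degree n H u)"

lemma has_lollipop_mono: "has_lollipop n H a L \<Longrightarrow> L \<le> L' \<Longrightarrow> has_lollipop n H a L'"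
  unfolding has_lollipop_def using order_trans by blast

lemma walk_le_imp_path_first_hit:
  assumes "w0 \<in> C" "walk_le H R a w0"
  obtains P where "P \<noteq> []" "hd P = a" "last P \<in> C" "length P \<le> Suc R" "distinct P" "is_walk H P"
    and "\<And>j. Suc j < length P \<Longrightarrow> P ! j \<notin> C"
proof -
  let ?hit = "\<lambda>r. \<exists>w\<in>C. walk_le H r a w"
  define r0 where "r0 = (LEAST r. ?hit r)"
  have r0R: "r0 \<le> R" unfolding r0_def using assms by (intro Least_le) blast
  obtain w where w: "w \<in> C" "walk_le H r0 a w"
    using LeastI_ex[of ?hit] assms unfolding r0_def by blast
  obtain P where P: "P \<noteq> []" "hd P = a" "last P = w" "length P \<le> Suc r0" "distinct P" "is_walk H P"
    using walk_le_imp_path[OF w(2)] by blast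
  have "P ! j \<notin> C" if j: "Suc j < length P" for j
  proof
    assume "P ! j \<in> C"
    let ?Q = "take (Suc j) P"
    have "walk_le H (length ?Q - 1) (hd ?Q) (last ?Q)"
      using P(1,6) by (intro is_walk_imp_walk_le is_walk_take) simp_all
    moreover have "hd ?Q = a" "last ?Q = P ! j" "length ?Q = Suc j"
      using j P(1,2) by (simp_all add: last_conv_nth min_def)
    ultimately have "?hit j" using \<open>P ! j \<in> C\<close> by auto
    then have "r0 \<le> j" unfolding r0_def by (rule Least_le)
    then show False using j P(4) by simp
  qed
  then show ?thesis using that P w(1) r0R by auto
qed

lemma is_closed_walk_rotate_to:
  assumes "is_closed_walk H cs" "distinct cs" "w \<in> set cs"
  obtains cs' where "is_closed_walk H cs'" "distinct cs'" "set cs' = set cs" "length cs' = length cs"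
    "cs' = w # tl cs'"
proof -
  obtain i where i: "i < length cs" "cs ! i = w" using assms(3) by (meson in_set_conv_nth)
  moreover have "cs \<noteq> []" using i by auto
  ultimately have "hd (rotate i cs) = w" by (simp add: hd_rotate_conv_nth)
  moreover have "rotate i cs \<noteq> []" using \<open>cs \<noteq> []\<close> by simp
  ultimately have "rotate i cs = w # tl (rotate i cs)" by (cases "rotate i cs") auto
  then show ?thesis using assms
    by (intro that[of "rotate i cs"]) (simp_all add: is_closed_walk_rotate)
qed

text \<open>Walk from \<open>a\<close> to the cycle along a shortest path, then once around the cycle: the last
  vertex is adjacent to the point \<open>w\<close> where the path met the cycle.\<close>
lemma cycle_imp_lollipop:
  assumes H: "H \<subseteq> all_pairs n" and a: "a < n"
    and cs: "3 \<le> length cs" "distinct cs" "is_closed_walk H cs" "set cs \<subseteq> ball {..<n} H a R"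
  shows "has_lollipop n H a (R + length cs)"
proof -
  have hd: "hd cs \<in> set cs" using cs(1) by (cases cs) auto
  have walk: "walk_le H R a (hd cs)" using hd cs(4) unfolding ball_def by blast
  obtain P where P: "P \<noteq> []" "hd P = a" "last P \<in> set cs" "length P \<le> Suc R" "distinct P"
      "is_walk H P" and P_avoids: "\<And>j. Suc j < length P \<Longrightarrow> P ! j \<notin> set cs"
    using walk_le_imp_path_first_hit[OF hd walk] by metis
  define w where "w = last P"
  obtain cs' where cs': "is_closed_walk H cs'" "distinct cs'" "set cs' = set cs"
      "length cs' = length cs" and cs'_eq: "cs' = w # tl cs'"
    using is_closed_walk_rotate_to[OF cs(3,2) P(3)[folded w_def]] by blast
  have "2 \<le> length (tl cs')" using cs(1) cs'(4) by simp
  then have tl_ne: "tl cs' \<noteq> []" by (metis list.size(3) not_numeral_le_zero)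
  define ys where "ys = P @ tl cs'"
  have "set P \<inter> set (tl cs') = {}"
  proof -
    have "x \<notin> set (tl cs')" if "x \<in> set P" for x
    proof -
      obtain j where j: "j < length P" "P ! j = x" using \<open>x \<in> set P\<close> by (meson in_set_conv_nth)
      show ?thesis
      proof (cases "Suc j < length P")
        case True
        have "set (tl cs') \<subseteq> set cs" using cs'(3) cs'_eq by (metis set_subset_Cons)
        then show ?thesis using P_avoids[OF True] j(2) by blast
      next
        case False
        then have "j = length P - 1" using j(1) by simp
        then have "x = w" using j(2) P(1) unfolding w_def by (simp add: last_conv_nth)
        then show ?thesis using cs'(2) cs'_eq by (metis distinct.simps(2))
      qed
    qed
    then show ?thesis by blast
  qed
  then have "distinct ys" unfolding ys_def using P(5) cs'(2) by (simp add: distinct_tl)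
  moreover have "hd ys = a" unfolding ys_def using P by simp
  moreover have "is_walk H ys"
  proof -
    have "is_walk H cs'" using cs'(1) by (simp add: is_closed_walk_def)
    then have "is_walk H (tl cs')" "{w, hd (tl cs')} \<in> H" using cs'_eq tl_ne
      by (metis is_walk_Cons)+
    then show ?thesis unfolding ys_def w_def using P(6) by (simp add: is_walk_append)
  qed
  moreover have "set ys \<subseteq> {..<n}"
    using is_walk_set_subset[OF \<open>is_walk H ys\<close> H] \<open>hd ys = a\<close> a ys_def P(1) by simp
  moreover have "length P - 1 + 2 < length ys" unfolding ys_def using cs(1) cs'(4) P(1) by auto
  moreover have "{last ys, ys ! (length P - 1)} \<in> H"
  proof -
    have "last ys = last cs'" unfolding ys_def using tl_ne cs'_eq by (metis last_appendR last_ConsR)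
    moreover have "ys ! (length P - 1) = w" unfolding ys_def w_def using P(1)
      by (simp add: nth_append last_conv_nth)
    ultimately show ?thesis using cs'(1) cs'_eq by (metis is_closed_walk_def list.sel(1))
  qed
  moreover have "length ys \<le> R + length cs" unfolding ys_def using P(4) cs'(4) cs(1) by auto
  moreover have "ys \<noteq> []" unfolding ys_def using P(1) by simp
  ultimately show ?thesis unfolding has_lollipop_def by blast
qed

lemma not_small_tree_imp_lollipop:
  assumes H: "H \<subseteq> all_pairs n" and G: "G \<subseteq> H" and a: "a < n"
    and v: "v \<in> ball {..<n} H a (k + 1)"
    and deg: "\<forall>u\<in>ball {..<n} H a (2 * k + 1). degree n H u \<le> d"
    and d: "real ((1 + d) ^ k) \<le> t_k c k"
    and not_small: "\<not> small_tree_ball k c n G v"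
  shows "has_lollipop n H a (2 * k + 1 + (1 + d) ^ (2 * k + 1))"
proof -
  let ?Ba = "ball {..<n} H a (2 * k + 1)"
  let ?BG = "ball {..<n} G v k"
  have vn: "v < n" and av: "walk_le H (k + 1) a v" using v unfolding ball_def by auto
  have BH_Ba: "ball {..<n} H v k \<subseteq> ?Ba"
  proof
    fix u assume "u \<in> ball {..<n} H v k"
    then have "u < n" "walk_le H k v u" unfolding ball_def by auto
    then have "walk_le H ((k + 1) + k) a u" using walk_le_trans[OF av] by blast
    then show "u \<in> ?Ba" using \<open>u < n\<close> unfolding ball_def by (simp add: mult_2)
  qed
  have BG_BH: "?BG \<subseteq> ball {..<n} H v k" by (rule ball_mono_edges[OF G])
  have BG_Ba: "?BG \<subseteq> ?Ba" using BG_BH BH_Ba by (rule order_trans)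
  have "card ?BG \<le> card (ball {..<n} H v k)" by (intro card_mono finite_ball BG_BH)
  also have "\<dots> \<le> (1 + d) ^ k"
    by (rule card_ball_le[OF vn _ le_refl H]) (use deg BH_Ba in blast)
  finally have "real (card ?BG) \<le> t_k c k" using d by (meson of_nat_le_iff order_trans)
  moreover have "1 \<le> card ?BG"
    using ball_center[OF vn, of G k] finite_ball[of n G v k]
    by (metis card_0_eq empty_iff less_one not_le)
  ultimately have "\<not> is_tree ?BG (induced G ?BG)"
    using not_small unfolding small_tree_ball_def by (simp add: Let_def)
  then obtain cs where cs: "3 \<le> length cs" "distinct cs" "set cs \<subseteq> ?BG"
      "is_closed_walk (induced G ?BG) cs"
    using ball_not_tree_imp_cycle[OF _ vn] G H unfolding has_cycle_iff by blast
  have "is_closed_walk H cs"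
    by (rule is_closed_walk_mono[OF cs(4)]) (use G in \<open>auto simp: induced_def\<close>)
  then have "has_lollipop n H a (2 * k + 1 + length cs)"
    using cs BG_Ba by (intro cycle_imp_lollipop[OF H a]) auto
  moreover have "length cs \<le> (1 + d) ^ (2 * k + 1)"
  proof -
    have "length cs = card (set cs)" using cs(2) by (simp add: distinct_card)
    also have "\<dots> \<le> card ?Ba" using cs(3) BG_Ba by (intro card_mono finite_ball) auto
    also have "\<dots> \<le> (1 + d) ^ (2 * k + 1)" using deg by (intro card_ball_le[OF a _ le_refl H])
    finally show ?thesis .
  qed
  ultimately show ?thesis using has_lollipop_mono by simp
qed

lemma card_ball_sq_le:
  assumes "H \<subseteq> all_pairs n" "a < n" "\<forall>u\<in>ball {..<n} H a (2 * k + 1). degree n H u \<le> d"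
  shows "(real (card (ball {..<n} H a (k + 1))))\<^sup>2 \<le> real ((1 + d) ^ (2 * k + 2))"
proof -
  have "card (ball {..<n} H a (k + 1)) \<le> (1 + d) ^ (k + 1)"
    using assms by (intro card_ball_le) auto
  then have "(card (ball {..<n} H a (k + 1)))\<^sup>2 \<le> ((1 + d) ^ (k + 1))\<^sup>2"
    by (rule power_mono) simp
  also have "\<dots> = (1 + d) ^ ((k + 1) * 2)" by (simp only: power_mult)
  also have "(k + 1) * 2 = 2 * k + 2" by simp
  finally show ?thesis by (metis of_nat_le_iff of_nat_power)
qed

text \<open>Adding or removing the edge \<open>{a, b}\<close> only changes the truncation error at vertices
  within distance \<open>k\<close> of \<open>a\<close> or \<open>b\<close>, all of which lie in the ball of radius \<open>k + 1\<close>
  around \<open>a\<close>; each changes by at most one, and only if some ball there is not a small tree.\<close>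
lemma edge_diff_sq_le_ball:
  assumes "weight_fun \<beta>"
  shows "((\<Sum>v<n. truncation_error k c \<beta> n (insert {a, b} S) v)
          - (\<Sum>v<n. truncation_error k c \<beta> n (S - {{a, b}}) v))\<^sup>2
    \<le> (real (card (ball {..<n} (insert {a, b} S) a (k + 1))))\<^sup>2
        * of_bool (\<exists>v\<in>ball {..<n} (insert {a, b} S) a (k + 1).
             \<not> small_tree_ball k c n (insert {a, b} S) v \<or> \<not> small_tree_ball k c n (S - {{a, b}}) v)"
    (is "?D\<^sup>2 \<le> (real (card ?B))\<^sup>2 * of_bool ?bad")
proof -
  let ?H = "insert {a, b} S" and ?G = "S - {{a, b}}"
  let ?d = "\<lambda>v. truncation_error k c \<beta> n ?H v - truncation_error k c \<beta> n ?G v"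
  have far: "?d v = 0" if "v < n" "v \<notin> ?B" for v
  proof -
    have "\<not> walk_le ?H k v a"
    proof
      assume "walk_le ?H k v a"
      then have "walk_le ?H (k + 1) a v" by (meson walk_le_sym walk_le_mono le_add1)
      then show False using that unfolding ball_def by simp
    qed
    moreover have "\<not> walk_le ?H k v b"
    proof
      assume "walk_le ?H k v b"
      moreover have "walk_le ?H 1 a b" by simp
      ultimately have "walk_le ?H (1 + k) a v" by (meson walk_le_sym walk_le_trans)
      then show False using that unfolding ball_def by simp
    qed
    ultimately show ?thesis using truncation_error_remove_far_edge[of ?H k v a b c \<beta> n] by simp
  qed
  have "?D = (\<Sum>v<n. ?d v)" by (simp add: sum_subtractf)
  also have "\<dots> = (\<Sum>v\<in>?B. ?d v)"
    using far by (intro sum.mono_neutral_right) (auto simp: ball_def)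
  finally have "\<bar>?D\<bar> \<le> (\<Sum>v\<in>?B. \<bar>?d v\<bar>)" by (simp add: sum_abs)
  also have "\<dots> \<le> (\<Sum>v\<in>?B. of_bool ?bad)"
  proof (rule sum_mono)
    fix v assume "v \<in> ?B"
    then show "\<bar>?d v\<bar> \<le> of_bool ?bad"
      using truncation_error_bounds[OF assms, of k c n ?H v]
        truncation_error_bounds[OF assms, of k c n ?G v]
      by (cases "small_tree_ball k c n ?H v \<and> small_tree_ball k c n ?G v")
         (auto simp: truncation_error_small_tree)
  qed
  finally have "\<bar>?D\<bar> \<le> real (card ?B) * of_bool ?bad" by simp
  then have "\<bar>?D\<bar>\<^sup>2 \<le> (real (card ?B) * of_bool ?bad)\<^sup>2" by (rule power_mono) simp
  also have "\<dots> = (real (card ?B))\<^sup>2 * of_bool ?bad" by (cases ?bad) simp_all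
  finally show ?thesis by simp
qed

text \<open>If all degrees near \<open>a\<close> are at most \<open>d\<close>, every ball of radius \<open>k\<close> near \<open>a\<close> is small,
  so a change forces a cycle, i.e.\ a lollipop; otherwise the change is bounded in terms of the
  maximal degree \<open>m > d\<close> found near \<open>a\<close>.\<close>
lemma edge_diff_sq_le:
  assumes S: "S \<subseteq> all_pairs n" and ab: "a < b" "b < n" and \<beta>: "weight_fun \<beta>"
    and d: "real ((1 + d) ^ k) \<le> t_k c k"
  shows "((\<Sum>v<n. truncation_error k c \<beta> n (insert {a, b} S) v)
          - (\<Sum>v<n. truncation_error k c \<beta> n (S - {{a, b}}) v))\<^sup>2
    \<le> real ((1 + d) ^ (2 * k + 2))
          * of_bool (has_lollipop n (insert {a, b} S) a (2 * k + 1 + (1 + d) ^ (2 * k + 1)))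
      + (\<Sum>m\<in>{d + 1..n}. real ((1 + m) ^ (2 * k + 2))
          * of_bool (has_heavy_vertex n (insert {a, b} S) a (2 * k + 1) m))"
    (is "?D2 \<le> ?lollipop + ?heavy")
proof -
  let ?H = "insert {a, b} S" and ?G = "S - {{a, b}}"
  let ?B = "ball {..<n} ?H a (k + 1)" and ?Ba = "ball {..<n} ?H a (2 * k + 1)"
  have H: "?H \<subseteq> all_pairs n" using S ab unfolding all_pairs_def by auto
  have a: "a < n" using ab by simp
  have D2: "?D2 \<le> (real (card ?B))\<^sup>2 * of_bool (\<exists>v\<in>?B.
      \<not> small_tree_ball k c n ?H v \<or> \<not> small_tree_ball k c n ?G v)"
    by (rule edge_diff_sq_le_ball[OF \<beta>])
  have heavy_nonneg: "0 \<le> ?heavy" by (intro sum_nonneg) simp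
  show ?thesis
  proof (cases "\<forall>u\<in>?Ba. degree n ?H u \<le> d")
    case True
    have "?D2 \<le> ?lollipop"
    proof (cases "\<exists>v\<in>?B. \<not> small_tree_ball k c n ?H v \<or> \<not> small_tree_ball k c n ?G v")
      case bad: True
      have "?G \<subseteq> ?H" "?H \<subseteq> ?H" by auto
      then have "has_lollipop n ?H a (2 * k + 1 + (1 + d) ^ (2 * k + 1))"
        using bad not_small_tree_imp_lollipop[OF H _ a _ True d] by metis
      then show ?thesis using D2 card_ball_sq_le[OF H a True] bad by simp
    next
      case False
      then show ?thesis using D2 by simp
    qed
    then show ?thesis using heavy_nonneg by simp
  next
    case False
    define m where "m = Max (degree n ?H ` ?Ba)"
    have deg_m: "\<forall>u\<in>?Ba. degree n ?H u \<le> m" unfolding m_def by (simp add: finite_ball)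
    have "m \<in> degree n ?H ` ?Ba"
      unfolding m_def using ball_center[OF a, of ?H "2 * k + 1"]
      by (intro Max_in) (auto simp: finite_ball)
    then obtain u where u: "u \<in> ?Ba" "degree n ?H u = m" by auto
    have "d < m" using False deg_m by (meson le_trans not_le)
    moreover have "m \<le> n" using u(2) degree_le by metis
    ultimately have m_range: "m \<in> {d + 1..n}" by simp
    have "?D2 \<le> (real (card ?B))\<^sup>2"
      using D2 by (cases "\<exists>v\<in>?B. \<not> small_tree_ball k c n ?H v \<or> \<not> small_tree_ball k c n ?G v") simp_all
    also have "\<dots> \<le> real ((1 + m) ^ (2 * k + 2))" by (rule card_ball_sq_le[OF H a deg_m])
    also have "\<dots> = real ((1 + m) ^ (2 * k + 2)) * of_bool (has_heavy_vertex n ?H a (2 * k + 1) m)"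
      using u unfolding has_heavy_vertex_def by auto
    also have "\<dots> \<le> ?heavy"
      by (rule member_le_sum[OF _ _ finite_atLeastAtMost, of m]) (use m_range in auto)
    finally have "?D2 \<le> ?heavy" .
    moreover have "0 \<le> ?lollipop" by simp
    ultimately show ?thesis by linarith
  qed
qed

section \<open>Counting witnesses\<close>

definition walk_edges :: "nat list \<Rightarrow> nat set set" where
  "walk_edges ys = (\<lambda>i. {ys ! i, ys ! Suc i}) ` {i. Suc i < length ys}"

lemma is_walk_iff_walk_edges: "is_walk E ys \<longleftrightarrow> walk_edges ys \<subseteq> E"
  unfolding is_walk_nth walk_edges_def by auto

lemma card_walk_edges:
  assumes "distinct ys"
  shows "card (walk_edges ys) = length ys - 1"
proof -
  have "inj_on (\<lambda>i. {ys ! i, ys ! Suc i}) {i. Suc i < length ys}"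
  proof (rule inj_onI)
    fix i j assume i: "i \<in> {i. Suc i < length ys}" and j: "j \<in> {i. Suc i < length ys}"
      and eq: "{ys ! i, ys ! Suc i} = {ys ! j, ys ! Suc j}"
    have "ys ! i = ys ! j \<or> ys ! i = ys ! Suc j" using eq by (auto simp: doubleton_eq_iff)
    then have "i = j \<or> i = Suc j" using i j assms by (auto simp: nth_eq_iff_index_eq)
    moreover have "ys ! j = ys ! i \<or> ys ! j = ys ! Suc i" using eq by (auto simp: doubleton_eq_iff)
    then have "j = i \<or> j = Suc i" using i j assms by (auto simp: nth_eq_iff_index_eq)
    ultimately show "i = j" by auto
  qed
  moreover have "{i. Suc i < length ys} = {..<length ys - 1}" by auto
  ultimately show ?thesis unfolding walk_edges_def by (simp add: card_image)
qed

lemma walk_edges_subset: "e \<in> walk_edges ys \<Longrightarrow> e \<subseteq> set ys"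
  unfolding walk_edges_def by auto

lemma walk_edges_last:
  assumes "distinct ys" "{last ys, w} \<in> walk_edges ys" "ys \<noteq> []"
  shows "length ys \<ge> 2 \<and> w = ys ! (length ys - 2)"
proof -
  obtain i where i: "Suc i < length ys" "{last ys, w} = {ys ! i, ys ! Suc i}"
    using assms(2) unfolding walk_edges_def by auto
  have l: "last ys = ys ! (length ys - 1)" using assms(3) by (simp add: last_conv_nth)
  have "last ys = ys ! i \<or> last ys = ys ! Suc i" using i(2) by (auto simp: doubleton_eq_iff)
  then have "length ys - 1 = i \<or> length ys - 1 = Suc i" using l i(1) assms(1)
    by (auto simp: nth_eq_iff_index_eq)
  then have si: "Suc i = length ys - 1" using i(1) by auto
  then have "w = ys ! i" using i(2) l by (auto simp: doubleton_eq_iff)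
  moreover have "i = length ys - 2" "length ys \<ge> 2" using si i(1) by arith+
  ultimately show ?thesis by simp
qed

definition paths_from :: "nat \<Rightarrow> nat \<Rightarrow> nat \<Rightarrow> nat list set" where
  "paths_from n x j = {ys. distinct ys \<and> ys \<noteq> [] \<and> hd ys = x \<and> set ys \<subseteq> {..<n} \<and> length ys = Suc j}"

lemma paths_from_subset: "paths_from n x j \<subseteq> (\<lambda>zs. x # zs) ` {zs. set zs \<subseteq> {..<n} \<and> length zs = j}"
proof
  fix ys assume "ys \<in> paths_from n x j"
  then have "ys = x # tl ys" "set (tl ys) \<subseteq> {..<n}" "length (tl ys) = j"
    unfolding paths_from_def by (auto simp: list.set_sel(2) subset_iff)
  then show "ys \<in> (\<lambda>zs. x # zs) ` {zs. set zs \<subseteq> {..<n} \<and> length zs = j}" by blast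
qed

lemma finite_paths_from: "finite (paths_from n x j)"
  by (rule finite_subset[OF paths_from_subset]) (simp add: finite_lists_length_eq)

lemma card_paths_from_le: "card (paths_from n x j) \<le> n ^ j"
proof -
  have "card (paths_from n x j) \<le> card ((\<lambda>zs. x # zs) ` {zs. set zs \<subseteq> {..<n} \<and> length zs = j})"
    by (rule card_mono[OF _ paths_from_subset]) (simp add: finite_lists_length_eq)
  also have "\<dots> \<le> card {zs. set zs \<subseteq> {..<n} \<and> length zs = j}"
    by (rule card_image_le) (simp add: finite_lists_length_eq)
  also have "\<dots> = n ^ j" by (simp add: card_lists_length_eq)
  finally show ?thesis .
qed

lemma power_le_pred_power_add: "(n::nat) ^ t \<le> (n - 1) ^ t + t * n ^ (t - 1)"
proof (induction t)
  case 0 then show ?case by simp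
next
  case (Suc t)
  show ?case
  proof (cases "n = 0")
    case True then show ?thesis by simp
  next
    case False
    have "n ^ Suc t = n * n ^ t" by simp
    also have "\<dots> \<le> n * ((n - 1) ^ t + t * n ^ (t - 1))" using Suc by simp
    also have "\<dots> = (n - 1) * (n - 1) ^ t + (n - 1) ^ t + t * (n * n ^ (t - 1))"
      using False by (simp add: algebra_simps)
    also have "\<dots> \<le> (n - 1) ^ Suc t + n ^ t + t * n ^ t"
    proof -
      have "(n - 1) ^ t \<le> n ^ t" by (rule power_mono) auto
      moreover have "t * (n * n ^ (t - 1)) \<le> t * n ^ t" by (cases t) auto
      ultimately show ?thesis by (simp add: add_mono)
    qed
    also have "\<dots> = (n - 1) ^ Suc t + Suc t * n ^ (Suc t - 1)" by simp
    finally show ?thesis .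
  qed
qed

lemma card_paths_from_through_le:
  assumes "b < n" "a \<noteq> b"
  shows "card {ys \<in> paths_from n a t. b \<in> set ys} \<le> t * n ^ (t - 1)"
proof -
  let ?L = "\<lambda>A. {zs. set zs \<subseteq> A \<and> length zs = t}"
  have sub: "{ys \<in> paths_from n a t. b \<in> set ys} \<subseteq> (\<lambda>zs. a # zs) ` (?L {..<n} - ?L ({..<n} - {b}))"
  proof
    fix ys assume "ys \<in> {ys \<in> paths_from n a t. b \<in> set ys}"
    then have ys: "ys \<in> paths_from n a t" "b \<in> set ys" by auto
    then obtain zs where zs: "ys = a # zs" "zs \<in> ?L {..<n}" using paths_from_subset by blast
    then have "b \<in> set zs" using ys(2) assms(2) by auto
    then have "zs \<notin> ?L ({..<n} - {b})" by auto
    then show "ys \<in> (\<lambda>zs. a # zs) ` (?L {..<n} - ?L ({..<n} - {b}))" using zs by blast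
  qed
  have fin: "finite (?L {..<n})" by (simp add: finite_lists_length_eq)
  have "card {ys \<in> paths_from n a t. b \<in> set ys}
      \<le> card ((\<lambda>zs. a # zs) ` (?L {..<n} - ?L ({..<n} - {b})))"
    by (rule card_mono[OF _ sub]) (use fin in auto)
  also have "\<dots> \<le> card (?L {..<n} - ?L ({..<n} - {b}))" by (rule card_image_le) (use fin in auto)
  also have "\<dots> = card (?L {..<n}) - card (?L ({..<n} - {b}))"
    by (rule card_Diff_subset) (auto simp: finite_lists_length_eq)
  also have "\<dots> = n ^ t - (n - 1) ^ t" using assms(1) by (simp add: card_lists_length_eq)
  also have "\<dots> \<le> t * n ^ (t - 1)" using power_le_pred_power_add[of n t] by simp
  finally show ?thesis .
qed

text \<open>A vertex of degree above \<open>r\<close> at distance \<open>j\<close> from \<open>x\<close> is witnessed by a path from \<open>x\<close> to it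
  together with \<open>r\<close> of its other neighbours, none of them the path's previous vertex, so that all
  \<open>j + r\<close> edges of this star are distinct.\<close>
definition star_leaves :: "nat \<Rightarrow> nat list \<Rightarrow> nat \<Rightarrow> nat set set" where
  "star_leaves n ys r = {Q. Q \<subseteq> {..<n} - {last ys, ys ! (length ys - 2)} \<and> card Q = r}"

definition star_edges :: "nat list \<Rightarrow> nat set \<Rightarrow> nat set set" where
  "star_edges ys Q = walk_edges ys \<union> (\<lambda>w. {last ys, w}) ` Q"

lemma finite_star_leaves: "finite (star_leaves n ys r)"
proof (rule finite_subset)
  show "star_leaves n ys r \<subseteq> Pow {..<n}" unfolding star_leaves_def by blast
qed simp

lemma card_star_leaves_le: "card (star_leaves n ys r) \<le> n choose r"
proof -
  let ?X = "{..<n} - {last ys, ys ! (length ys - 2)}"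
  have eq: "star_leaves n ys r = {Q. Q \<subseteq> ?X \<and> card Q = r}" unfolding star_leaves_def by (rule refl)
  have finX: "finite ?X" by (intro finite_Diff finite_lessThan)
  have "card (star_leaves n ys r) = card ?X choose r" unfolding eq by (rule n_subsets[OF finX])
  also have "\<dots> \<le> n choose r"
  proof -
    have "card ?X \<le> card {..<n}" by (rule card_mono[OF finite_lessThan Diff_subset])
    then have cX: "card ?X \<le> n" by simp
    show "card ?X choose r \<le> n choose r" using cX by (rule binomial_right_mono)
  qed
  finally show ?thesis .
qed

lemma finite_walk_edges: "finite (walk_edges ys)"
  unfolding walk_edges_def by (rule finite_imageI) (rule finite_subset[of _ "{..<length ys}"], auto)

lemma card_star_edges_ge:
  assumes "ys \<in> paths_from n x j" "Q \<in> star_leaves n ys r"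
  shows "j + r \<le> card (star_edges ys Q)"
proof -
  have d: "distinct ys" "ys \<noteq> []" "length ys = Suc j" using assms(1) unfolding paths_from_def
    by auto
  have Q: "Q \<subseteq> {..<n} - {last ys, ys ! (length ys - 2)}" "card Q = r"
    using assms(2) unfolding star_leaves_def by auto
  have finQ: "finite Q" by (rule finite_subset[OF Q(1)]) simp
  have inj: "inj_on (\<lambda>w. {last ys, w}) Q"
    by (rule inj_onI) (auto simp: doubleton_eq_iff)
  have disj: "walk_edges ys \<inter> (\<lambda>w. {last ys, w}) ` Q = {}"
  proof (rule ccontr)
    assume "walk_edges ys \<inter> (\<lambda>w. {last ys, w}) ` Q \<noteq> {}"
    then obtain w where w: "w \<in> Q" "{last ys, w} \<in> walk_edges ys" by auto
    then have "w = ys ! (length ys - 2)" using walk_edges_last[OF d(1) w(2) d(2)] by simp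
    then show False using w(1) Q(1) by auto
  qed
  have "card (star_edges ys Q) = card (walk_edges ys) + card ((\<lambda>w. {last ys, w}) ` Q)"
    unfolding star_edges_def
    by (rule card_Un_disjoint[OF finite_walk_edges _ disj]) (use finQ in simp)
  also have "\<dots> = j + r" using card_walk_edges[OF d(1)] d(3) card_image[OF inj] Q(2) by simp
  finally show ?thesis by simp
qed

lemma heavy_vertex_star:
  assumes x: "x < n" and S: "S \<subseteq> all_pairs n" and heavy: "has_heavy_vertex n S x R (r + 1)"
  shows "\<exists>j\<in>{..R}. \<exists>ys\<in>paths_from n x j. \<exists>Q\<in>star_leaves n ys r. star_edges ys Q \<subseteq> S"
proof -
  obtain u where u: "u \<in> ball {..<n} S x R" "r + 1 \<le> degree n S u"
    using heavy unfolding has_heavy_vertex_def by blast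
  have wu: "walk_le S R x u" "u < n" using u(1) unfolding ball_def by auto
  obtain P where P: "P \<noteq> []" "hd P = x" "last P = u" "length P \<le> Suc R" "distinct P" "is_walk S P"
    using walk_le_imp_path[OF wu(1)] by blast
  have setP: "set P \<subseteq> {..<n}" using is_walk_set_subset[OF P(6) S P(1)] P(2) x by simp
  define j where "j = length P - 1"
  have P_path: "P \<in> paths_from n x j" unfolding paths_from_def j_def using P setP by auto
  have jR: "j \<le> R" unfolding j_def using P(4) by simp
  let ?pr = "P ! (length P - 2)"
  let ?N = "neighbours n S u - {last P, ?pr}"
  have "u \<notin> neighbours n S u"
    using S all_pairs_mem[of u u n] unfolding neighbours_def by auto
  then have "?N = neighbours n S u - {?pr}" using P(3) by auto
  moreover have "card (neighbours n S u) - 1 \<le> card (neighbours n S u - {?pr})"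
    by (simp add: card_Diff_singleton_if)
  ultimately have "r \<le> card ?N" using u(2) unfolding degree_def by simp
  then obtain Q where Q: "Q \<subseteq> ?N" "card Q = r" by (meson obtain_subset_with_card_n)
  have Q_leaves: "Q \<in> star_leaves n P r" unfolding star_leaves_def using Q unfolding neighbours_def
    by auto
  have "walk_edges P \<subseteq> S" using P(6) is_walk_iff_walk_edges by blast
  moreover have "(\<lambda>w. {last P, w}) ` Q \<subseteq> S" using Q(1) P(3) unfolding neighbours_def by auto
  ultimately have "star_edges P Q \<subseteq> S" unfolding star_edges_def by auto
  then show ?thesis using jR P_path Q_leaves by blast
qed

lemma prob_star_le:
  assumes p: "0 \<le> p" "p \<le> 1"
  shows "expect_subset (all_pairs n) p
           (\<lambda>S. of_bool (\<exists>ys\<in>paths_from n x j. \<exists>Q\<in>star_leaves n ys r. star_edges ys Q \<subseteq> S))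
         \<le> real (n ^ j) * real (n choose r) * p ^ (j + r)"
proof -
  let ?I = "Sigma (paths_from n x j) (\<lambda>ys. star_leaves n ys r)"
  have finI: "finite ?I" by (intro finite_SigmaI finite_paths_from finite_star_leaves)
  have "expect_subset (all_pairs n) p
          (\<lambda>S. of_bool (\<exists>ys\<in>paths_from n x j. \<exists>Q\<in>star_leaves n ys r. star_edges ys Q \<subseteq> S))
      \<le> (\<Sum>i\<in>?I. p ^ card (case_prod star_edges i))"
    by (rule expect_subset_union_bound[OF finite_all_pairs p finI]) auto
  also have "\<dots> \<le> (\<Sum>i\<in>?I. p ^ (j + r))"
    using card_star_edges_ge p by (intro sum_mono) (auto intro: power_decreasing)
  also have "\<dots> = real (card ?I) * p ^ (j + r)" by simp
  also have "\<dots> \<le> real (n ^ j) * real (n choose r) * p ^ (j + r)"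
  proof -
    have "card ?I = (\<Sum>ys\<in>paths_from n x j. card (star_leaves n ys r))"
      by (rule card_SigmaI) (auto intro: finite_paths_from finite_star_leaves)
    also have "\<dots> \<le> (\<Sum>ys\<in>paths_from n x j. n choose r)"
      by (rule sum_mono) (rule card_star_leaves_le)
    also have "\<dots> = card (paths_from n x j) * (n choose r)" by simp
    also have "\<dots> \<le> n ^ j * (n choose r)" by (rule mult_right_mono[OF card_paths_from_le]) simp
    finally have "real (card ?I) \<le> real (n ^ j) * real (n choose r)"
      by (metis of_nat_le_iff of_nat_mult)
    then show ?thesis by (rule mult_right_mono) (use p in simp)
  qed
  finally show ?thesis .
qed

lemma prob_heavy_vertex_le_sum:
  assumes p: "0 \<le> p" "p \<le> 1" and x: "x < n"
  shows "expect_subset (all_pairs n) p (\<lambda>S. of_bool (has_heavy_vertex n S x R (r + 1)))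
     \<le> (\<Sum>j\<le>R. real (n ^ j) * real (n choose r) * p ^ (j + r))"
proof -
  have "expect_subset (all_pairs n) p (\<lambda>S. of_bool (has_heavy_vertex n S x R (r + 1)))
      \<le> (\<Sum>j\<le>R. expect_subset (all_pairs n) p
           (\<lambda>S. of_bool (\<exists>ys\<in>paths_from n x j. \<exists>Q\<in>star_leaves n ys r. star_edges ys Q \<subseteq> S)))"
    by (rule expect_subset_indicator_le_sum[OF p finite_atMost heavy_vertex_star[OF x]])
  also have "\<dots> \<le> (\<Sum>j\<le>R. real (n ^ j) * real (n choose r) * p ^ (j + r))"
    by (intro sum_mono prob_star_le p)
  finally show ?thesis .
qed

text \<open>With \<open>p = c / n\<close>, the \<open>n\<close>-dependence cancels: a vertex of degree above \<open>r\<close> near \<open>x\<close> has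
  probability at most a Poisson-type tail \<open>c\<^sup>r / r!\<close>, up to the factor counting paths to it.\<close>
lemma prob_heavy_vertex_le:
  assumes c: "c \<ge> 1" and n: "n \<ge> 1" and p: "c / real n \<le> 1" and x: "x < n"
  shows "expect_subset (all_pairs n) (c / real n) (\<lambda>S. of_bool (has_heavy_vertex n S x R (r + 1)))
     \<le> real (R + 1) * c ^ R * (c ^ r / fact r)"
proof -
  let ?p = "c / real n"
  have p0: "0 \<le> ?p" using c by simp
  have "real (n ^ j) * real (n choose r) * ?p ^ (j + r) \<le> c ^ R * (c ^ r / fact r)" if "j \<le> R" for j
  proof -
    have "fact r * real (n choose r) \<le> real n ^ r"
      using binomial_fact_pow[of n r]
      by (metis mult.commute of_nat_fact of_nat_le_iff of_nat_mult of_nat_power)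
    then have "real (n choose r) * ?p ^ r \<le> real n ^ r / fact r * ?p ^ r"
      by (intro mult_right_mono) (use c in \<open>simp_all add: field_simps\<close>)
    also have "\<dots> = c ^ r / fact r" using n by (simp add: power_divide)
    finally have choose: "real (n choose r) * ?p ^ r \<le> c ^ r / fact r" .
    have "real (n ^ j) * real (n choose r) * ?p ^ (j + r) = c ^ j * (real (n choose r) * ?p ^ r)"
      using n by (simp add: power_add power_divide)
    also have "\<dots> \<le> c ^ R * (c ^ r / fact r)"
      using c that by (intro mult_mono choose power_increasing) (auto simp: p0)
    finally show ?thesis .
  qed
  then have "(\<Sum>j\<le>R. real (n ^ j) * real (n choose r) * ?p ^ (j + r))
      \<le> (\<Sum>j\<le>R. c ^ R * (c ^ r / fact r))"
    by (intro sum_mono) simp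
  then show ?thesis using prob_heavy_vertex_le_sum[OF p0 p x, of R r] by simp
qed

lemma heavy_vertex_insert_edge:
  assumes "a \<noteq> b" "has_heavy_vertex n (insert {a, b} S) a R (Suc m)"
  shows "has_heavy_vertex n S a R m \<or> has_heavy_vertex n S b R m"
proof -
  obtain u where u: "u \<in> ball {..<n} (insert {a, b} S) a R" "Suc m \<le> degree n (insert {a, b} S) u"
    using assms(2) unfolding has_heavy_vertex_def by blast
  have "m \<le> degree n S u" using u(2) degree_insert_le[OF assms(1), of n S u] by simp
  moreover have "u < n" "walk_le (insert {a, b} S) R a u" using u(1) unfolding ball_def by auto
  then have "walk_le S R a u \<or> walk_le S R b u" using walk_le_insert_edge by blast
  ultimately show ?thesis using \<open>u < n\<close> unfolding has_heavy_vertex_def ball_def by auto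
qed

lemma prob_heavy_vertex_insert_le:
  assumes c: "c \<ge> 1" and n: "n \<ge> 1" and p: "c / real n \<le> 1"
    and ab: "a < b" "b < n" and m: "m \<ge> 2"
  shows "expect_subset (all_pairs n) (c / real n)
           (\<lambda>S. of_bool (has_heavy_vertex n (insert {a, b} S) a R m))
     \<le> 2 * real (R + 1) * c ^ R * (c ^ (m - 2) / fact (m - 2))"
proof -
  let ?p = "c / real n" and ?r = "m - 2"
  have p0: "0 \<le> ?p" using c by simp
  have "expect_subset (all_pairs n) ?p (\<lambda>S. of_bool (has_heavy_vertex n (insert {a, b} S) a R m))
     \<le> (\<Sum>x\<in>{a, b}. expect_subset (all_pairs n) ?p (\<lambda>S. of_bool (has_heavy_vertex n S x R (?r + 1))))"
  proof (rule expect_subset_indicator_le_sum[OF p0 p])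
    fix S assume "has_heavy_vertex n (insert {a, b} S) a R m"
    moreover have "m = Suc (?r + 1)" using m by simp
    ultimately show "\<exists>x\<in>{a, b}. has_heavy_vertex n S x R (?r + 1)"
      using heavy_vertex_insert_edge[of a b n S R "?r + 1"] ab by auto
  qed simp
  also have "\<dots> \<le> (\<Sum>x\<in>{a, b}. real (R + 1) * c ^ R * (c ^ ?r / fact ?r))"
    using ab by (intro sum_mono prob_heavy_vertex_le[OF c n p]) auto
  also have "\<dots> = 2 * real (R + 1) * c ^ R * (c ^ ?r / fact ?r)" using ab by simp
  finally show ?thesis .
qed

definition lollipop_edges :: "nat list \<Rightarrow> nat \<Rightarrow> nat set set" where
  "lollipop_edges ys i = insert {last ys, ys ! i} (walk_edges ys)"

lemma lollipop_witness:
  assumes S: "S \<subseteq> all_pairs n" and r: "has_lollipop n (insert {a, b} S) a L"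
  shows "\<exists>t\<in>{..<L}. \<exists>ys\<in>paths_from n a t. \<exists>i\<in>{..<t - 1}. lollipop_edges ys i - {{a, b}} \<subseteq> S"
proof -
  obtain ys i where ys: "ys \<noteq> []" "distinct ys" "hd ys = a" "is_walk (insert {a, b} S) ys"
      "set ys \<subseteq> {..<n}" "i + 2 < length ys" "{last ys, ys ! i} \<in> insert {a, b} S" "length ys \<le> L"
    using r unfolding has_lollipop_def by blast
  define t where "t = length ys - 1"
  have len: "length ys = Suc t" unfolding t_def using ys(1) by (cases ys) simp_all
  have "ys \<in> paths_from n a t" unfolding paths_from_def using ys(1,2,3,5) len by blast
  moreover have "t \<in> {..<L}" "i \<in> {..<t - 1}" using ys(6,8) len by simp_all
  moreover have "walk_edges ys \<subseteq> insert {a, b} S" using ys(4) by (simp only: is_walk_iff_walk_edges)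
  then have "lollipop_edges ys i - {{a, b}} \<subseteq> S" unfolding lollipop_edges_def using ys(7) by blast
  ultimately show ?thesis by blast
qed

lemma card_lollipop_edges:
  assumes "ys \<in> paths_from n a t" "i < t - 1"
  shows "card (lollipop_edges ys i) = t + 1"
proof -
  have d: "distinct ys" "ys \<noteq> []" "length ys = Suc t" using assms(1) unfolding paths_from_def
    by auto
  have "{last ys, ys ! i} \<notin> walk_edges ys"
  proof
    assume "{last ys, ys ! i} \<in> walk_edges ys"
    then have "ys ! i = ys ! (length ys - 2)" using walk_edges_last[OF d(1) _ d(2)] by blast
    then have "i = length ys - 2" using d assms(2) by (simp add: nth_eq_iff_index_eq)
    then show False using d(3) assms(2) by simp
  qed
  then show ?thesis unfolding lollipop_edges_def
    using card_walk_edges[OF d(1)] d(3) finite_walk_edges by simp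
qed

lemma lollipop_edges_subset: "e \<in> lollipop_edges ys i \<Longrightarrow> i < length ys \<Longrightarrow> ys \<noteq> [] \<Longrightarrow> e \<subseteq> set ys"
  unfolding lollipop_edges_def using walk_edges_subset by auto

lemma power_card_lollipop_edges_le:
  fixes p :: real
  assumes p: "0 \<le> p" "p \<le> 1" and ys: "ys \<in> paths_from n a t" and i: "i < t - 1"
  shows "p ^ card (lollipop_edges ys i - {{a, b}}) \<le> (if b \<in> set ys then p ^ t else p ^ (t + 1))"
proof -
  have c: "card (lollipop_edges ys i) = t + 1" by (rule card_lollipop_edges[OF ys i])
  have fin: "finite (lollipop_edges ys i)" unfolding lollipop_edges_def using finite_walk_edges
    by simp
  have ne: "ys \<noteq> []" "length ys = Suc t" using ys unfolding paths_from_def by auto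
  show ?thesis
  proof (cases "b \<in> set ys")
    case True
    have "t \<le> card (lollipop_edges ys i - {{a, b}})"
      using c fin card_Diff_singleton_if[of "lollipop_edges ys i" "{a, b}"] by auto
    then have "p ^ card (lollipop_edges ys i - {{a, b}}) \<le> p ^ t"
      using power_decreasing[of t "card (lollipop_edges ys i - {{a, b}})" p] p by simp
    then show ?thesis using True by simp
  next
    case False
    have "{a, b} \<notin> lollipop_edges ys i"
    proof
      assume "{a, b} \<in> lollipop_edges ys i"
      then have "{a, b} \<subseteq> set ys" using lollipop_edges_subset ne i by fastforce
      then show False using False by auto
    qed
    then show ?thesis using False c by simp
  qed
qed

lemma sum_paths_from_weight_le:
  assumes p: "0 \<le> p" "p \<le> 1" and ab: "a \<noteq> b" "b < n"
  shows "(\<Sum>ys\<in>paths_from n a t. if b \<in> set ys then p ^ t else p ^ (t + 1))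
      \<le> real (n ^ t) * p ^ (t + 1) + real (t * n ^ (t - 1)) * p ^ t"
proof -
  let ?P = "paths_from n a t" and ?Pb = "{ys \<in> paths_from n a t. b \<in> set ys}"
  have "(\<Sum>ys\<in>?P. if b \<in> set ys then p ^ t else p ^ (t + 1))
      \<le> (\<Sum>ys\<in>?P. p ^ (t + 1) + (if b \<in> set ys then p ^ t else 0))"
    using p by (intro sum_mono) auto
  also have "\<dots> = real (card ?P) * p ^ (t + 1) + real (card ?Pb) * p ^ t"
    by (simp add: sum.distrib sum.inter_filter[symmetric] finite_paths_from)
  also have "\<dots> \<le> real (n ^ t) * p ^ (t + 1) + real (t * n ^ (t - 1)) * p ^ t"
  proof -
    have "real (card ?P) \<le> real (n ^ t)" "real (card ?Pb) \<le> real (t * n ^ (t - 1))"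
      using card_paths_from_le[of n a t] card_paths_from_through_le[OF ab(2,1), of t]
      by (simp_all only: of_nat_le_iff)
    then show ?thesis using p by (intro add_mono mult_right_mono) simp_all
  qed
  finally show ?thesis .
qed

text \<open>A lollipop on \<open>t + 1\<close> vertices has \<open>t + 1\<close> edges, one more than there are free vertices,
  which gains a factor \<open>1/n\<close>. Only paths through \<open>b\<close> can use the given edge \<open>{a, b}\<close>, and there
  are a factor \<open>n\<close> fewer of those.\<close>
lemma prob_lollipop_length_le:
  assumes p: "0 \<le> p" "p \<le> 1" and ab: "a \<noteq> b" "b < n"
  shows "expect_subset (all_pairs n) p
           (\<lambda>S. of_bool (\<exists>ys\<in>paths_from n a t. \<exists>i\<in>{..<t - 1}. lollipop_edges ys i - {{a, b}} \<subseteq> S))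
     \<le> real t * (real (n ^ t) * p ^ (t + 1) + real (t * n ^ (t - 1)) * p ^ t)"
proof -
  let ?I = "Sigma (paths_from n a t) (\<lambda>_. {..<t - 1})"
  let ?g = "\<lambda>ys. if b \<in> set ys then p ^ t else p ^ (t + 1)"
  have finI: "finite ?I" by (intro finite_SigmaI finite_paths_from) simp
  have "expect_subset (all_pairs n) p
          (\<lambda>S. of_bool (\<exists>ys\<in>paths_from n a t. \<exists>i\<in>{..<t - 1}. lollipop_edges ys i - {{a, b}} \<subseteq> S))
      \<le> (\<Sum>x\<in>?I. p ^ card ((\<lambda>(ys, i). lollipop_edges ys i - {{a, b}}) x))"
    by (rule expect_subset_union_bound[OF finite_all_pairs p finI]) auto
  also have "\<dots> \<le> (\<Sum>x\<in>?I. ?g (fst x))"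
  proof (rule sum_mono)
    fix x assume "x \<in> ?I"
    then obtain ys i where x: "x = (ys, i)" "ys \<in> paths_from n a t" "i < t - 1" by auto
    show "p ^ card ((\<lambda>(ys, i). lollipop_edges ys i - {{a, b}}) x) \<le> ?g (fst x)"
      unfolding x using power_card_lollipop_edges_le[OF p x(2,3)] by simp
  qed
  also have "\<dots> = (\<Sum>ys\<in>paths_from n a t. \<Sum>i<t - 1. ?g ys)"
    by (subst sum.Sigma) (auto intro: finite_paths_from simp: case_prod_beta)
  also have "\<dots> = real (t - 1) * (\<Sum>ys\<in>paths_from n a t. ?g ys)"
    by (simp add: sum_distrib_left)
  also have "\<dots> \<le> real t * (real (n ^ t) * p ^ (t + 1) + real (t * n ^ (t - 1)) * p ^ t)"
    using sum_paths_from_weight_le[OF p ab] p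
    by (intro mult_mono sum_nonneg) auto
  finally show ?thesis .
qed

lemma prob_lollipop_le:
  assumes n: "n \<ge> 1" and p: "0 \<le> c / real n" "c / real n \<le> 1" and ab: "a < b" "b < n"
  shows "expect_subset (all_pairs n) (c / real n) (\<lambda>S. of_bool (has_lollipop n (insert {a, b} S) a L))
     \<le> (\<Sum>t<L. real t * (c ^ (t + 1) + real t * c ^ t)) / real n"
proof -
  let ?p = "c / real n"
  have "expect_subset (all_pairs n) ?p (\<lambda>S. of_bool (has_lollipop n (insert {a, b} S) a L))
      \<le> (\<Sum>t<L. expect_subset (all_pairs n) ?p (\<lambda>S. of_bool (\<exists>ys\<in>paths_from n a t.
           \<exists>i\<in>{..<t - 1}. lollipop_edges ys i - {{a, b}} \<subseteq> S)))"
    by (rule expect_subset_indicator_le_sum[OF p finite_lessThan lollipop_witness])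
  also have "\<dots> \<le> (\<Sum>t<L. real t * (real (n ^ t) * ?p ^ (t + 1) + real (t * n ^ (t - 1)) * ?p ^ t))"
    using ab by (intro sum_mono prob_lollipop_length_le[OF p]) auto
  also have "\<dots> = (\<Sum>t<L. real t * (c ^ (t + 1) + real t * c ^ t) / real n)"
  proof (rule sum.cong)
    fix t
    have short: "real (t * n ^ (t - 1)) * ?p ^ t = real t * c ^ t / real n"
    proof (cases t)
      case (Suc t')
      have "real (t * n ^ (t - 1)) * ?p ^ t = real t * (real (n ^ t') * ?p ^ Suc t')"
        unfolding Suc diff_Suc_1 of_nat_mult by (simp only: mult_ac)
      also have "real (n ^ t') * ?p ^ Suc t' = c ^ Suc t' / real n"
        using n by (simp add: power_divide field_simps)
      finally show ?thesis using Suc by simp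
    qed simp
    have long: "real (n ^ t) * ?p ^ (t + 1) = c ^ (t + 1) / real n"
      using n by (simp add: power_divide field_simps)
    show "real t * (real (n ^ t) * ?p ^ (t + 1) + real (t * n ^ (t - 1)) * ?p ^ t)
        = real t * (c ^ (t + 1) + real t * c ^ t) / real n"
      unfolding short long using n by (simp add: field_simps)
  qed simp
  also have "\<dots> = (\<Sum>t<L. real t * (c ^ (t + 1) + real t * c ^ t)) / real n"
    by (simp add: sum_divide_distrib)
  finally show ?thesis .
qed

section \<open>Numerical estimates\<close>

lemma power_div_fact_le_exp_self: "0 < (x::real) \<Longrightarrow> x ^ r / fact r \<le> exp x"
proof -
  assume x: "0 < x"
  have "pmf (poisson_pmf x) r \<le> 1" by (rule pmf_le_1)
  then have h: "x ^ r / fact r * exp (- x) \<le> 1" using x by simp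
  have "x ^ r / fact r = (x ^ r / fact r * exp (- x)) * exp x"
    by (simp add: exp_minus_inverse mult.assoc[symmetric] mult.commute[of "exp (-x)"])
  also have "\<dots> \<le> 1 * exp x" by (rule mult_right_mono[OF h]) simp
  finally show ?thesis by simp
qed

lemma log_power_le_half:
  fixes k :: nat and m :: real
  assumes k: "k \<ge> 100" and m: "m \<ge> 100 * (real k)\<^sup>2 - 1"
  shows "(2 * real k + 2) * ln (1 + m) \<le> m / 2"
proof -
  define s where "s = sqrt (1 + m)"
  have kk: "real k \<ge> 100" using k by simp
  have m1: "1 + m \<ge> (10 * real k)\<^sup>2" using m by (simp add: power2_eq_square)
  have pos: "0 < 1 + m" using m1 kk by (smt (verit) zero_less_power2)
  have s2: "s\<^sup>2 = 1 + m" unfolding s_def using pos by simp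
  have "sqrt ((10 * real k)\<^sup>2) \<le> s" unfolding s_def by (rule real_sqrt_le_mono[OF m1])
  moreover have "sqrt ((10 * real k)\<^sup>2) = 10 * real k" using kk by (simp only: real_sqrt_abs)
  ultimately have s10: "s \<ge> 10 * real k" by simp
  have spos: "0 < s" using s10 kk by simp
  have "ln (1 + m) = ln (s ^ 2)" using s2 by simp
  also have "\<dots> = 2 * ln s" using spos by (simp add: ln_realpow)
  also have "\<dots> \<le> 2 * (s - 1)" using ln_le_minus_one[OF spos] by simp
  finally have l: "ln (1 + m) \<le> 2 * (s - 1)" .
  have "(2 * real k + 2) * ln (1 + m) \<le> (2 * real k + 2) * (2 * (s - 1))"
    by (rule mult_left_mono[OF l]) simp
  also have "\<dots> = (4 * real k + 4) * (s - 1)" by (simp add: algebra_simps)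
  also have "\<dots> \<le> ((s + 1) / 2) * (s - 1)"
    by (rule mult_right_mono) (use s10 kk in auto)
  also have "\<dots> = m / 2" using s2 by (simp add: power2_eq_square algebra_simps)
  finally show ?thesis .
qed

lemma exp_3_le_27: "exp (3::real) \<le> 27"
proof -
  have "exp (3::real) = exp 1 * exp 1 * exp 1" by (simp add: exp_add[symmetric])
  also have "\<dots> \<le> 3 * 3 * 3" using exp_le by (intro mult_mono) auto
  finally show ?thesis by simp
qed

lemma power_div_fact_le_exp:
  assumes c: "0 < (c::real)"
  shows "c ^ j / fact j \<le> exp (27 * c - 3 * real j)"
proof -
  have "(exp 3 * c) ^ j / fact j \<le> exp (exp 3 * c)"
    by (rule power_div_fact_le_exp_self) (use c in simp)
  also have "\<dots> \<le> exp (27 * c)" using exp_3_le_27 c by simp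
  finally have h: "(exp 3 * c) ^ j / fact j \<le> exp (27 * c)" .
  have e3: "exp 3 ^ j = exp (3 * real j)" by (simp add: exp_of_nat_mult[symmetric] mult.commute)
  have "c ^ j / fact j = (exp 3 * c) ^ j / fact j / exp 3 ^ j" by (simp add: power_mult_distrib)
  also have "\<dots> \<le> exp (27 * c) / exp 3 ^ j" by (rule divide_right_mono[OF h]) simp
  also have "\<dots> = exp (27 * c - 3 * real j)" unfolding e3 by (simp add: exp_diff)
  finally show ?thesis .
qed

lemma exp_neg_le_half_power: "exp (- real (m::nat)) \<le> (1/2::real) ^ m"
proof -
  have "(2::real) ^ m \<le> exp 1 ^ m"
    by (rule power_mono) (use exp_ge_add_one_self[of 1] in auto)
  also have "exp 1 ^ m = exp (real m)" by (simp add: exp_of_nat_mult[symmetric])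
  finally have "2 ^ m \<le> exp (real m)" .
  then have "1 / exp (real m) \<le> 1 / 2 ^ m" by (intro divide_left_mono) auto
  then show ?thesis by (simp add: exp_minus power_one_over inverse_eq_divide)
qed

lemma power_le_exp_pred:
  assumes "0 < (c::real)"
  shows "c ^ j \<le> exp (real j * (c - 1))"
proof -
  have "c ^ j = exp (ln (c ^ j))" using assms by simp
  also have "\<dots> = exp (real j * ln c)" using assms by (simp add: ln_realpow)
  also have "\<dots> \<le> exp (real j * (c - 1))"
    using ln_le_minus_one[OF assms] by (simp add: mult_left_mono)
  finally show ?thesis .
qed

lemma power_le_exp_half:
  assumes k: "k \<ge> 100" and m: "real m \<ge> 100 * (real k)\<^sup>2 - 1"
  shows "real ((1 + m) ^ (2 * k + 2)) \<le> exp (real m / 2)"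
proof -
  have "real ((1 + m) ^ (2 * k + 2)) = exp (ln ((1 + real m) ^ (2 * k + 2)))"
    by (simp only: of_nat_power of_nat_add of_nat_1 exp_ln_iff) simp
  also have "\<dots> = exp (real (2 * k + 2) * ln (1 + real m))" by (subst ln_realpow) auto
  also have "\<dots> \<le> exp (real m / 2)" using log_power_le_half[OF k m] by (simp add: ac_simps)
  finally show ?thesis .
qed

lemma heavy_exponent_le:
  fixes k m :: nat and c :: real
  assumes k: "k \<ge> 100" and c: "c > 1" and m: "real m \<ge> 100 * c\<^sup>2 * (real k)\<^sup>2 - 1"
  shows "(c - 1) + real m / 2 + (4 * real k + 4) + real (2 * k + 1) * (c - 1)
           + (27 * c - 3 * (real m - 2))
         \<le> - (c\<^sup>2 * (real k)\<^sup>2) - real (m + 1)"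
proof -
  define x where "x = c * real k"
  have x100: "x \<ge> 100" and kx: "real k \<le> x" and cx: "c \<le> x"
    unfolding x_def using c k by (auto intro: order_trans[OF _ mult_right_mono[of 1 c]])
  have xx: "100 * x \<le> x * x" using x100 by (simp add: mult_right_mono)
  have c2k2: "c\<^sup>2 * (real k)\<^sup>2 = x * x" unfolding x_def by (simp add: power2_eq_square)
  have lin: "real (2 * k + 1) * (c - 1) = 2 * x + c - 2 * real k - 1"
    unfolding x_def by (simp add: algebra_simps)
  have "real m \<ge> 100 * (x * x) - 1" using m c2k2 by simp
  then have "29 * c + 2 * real k + 2 * x + 9 + x * x \<le> 3 / 2 * real m"
    using kx cx xx x100 by linarith
  then show ?thesis unfolding lin c2k2 by (simp add: field_simps)
qed

text \<open>Bound on the squared change of the truncation error caused by an edge near a vertex of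
  degree \<open>m\<close>, times the bound on the probability of such a vertex.\<close>
definition heavy_term :: "real \<Rightarrow> nat \<Rightarrow> nat \<Rightarrow> real" where
  "heavy_term c k m = real ((1 + m) ^ (2 * k + 2))
     * (2 * real (2 * k + 1 + 1) * c ^ (2 * k + 1) * (c ^ (m - 2) / fact (m - 2)))"

lemma heavy_term_le:
  fixes k m :: nat and c :: real
  assumes k: "k \<ge> 100" and c: "c > 1" and m: "real m \<ge> 100 * c\<^sup>2 * (real k)\<^sup>2 - 1"
  shows "c * heavy_term c k m \<le> exp (- (c\<^sup>2 * (real k)\<^sup>2)) * (1 / 2) ^ (m + 1)"
proof -
  have "(real k)\<^sup>2 \<le> c\<^sup>2 * (real k)\<^sup>2" using c by (simp add: mult_le_cancel_right1 power_le_one_iff)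
  then have mk: "real m \<ge> 100 * (real k)\<^sup>2 - 1" using m by simp
  have "1 \<le> (real k)\<^sup>2" using k by (simp add: one_le_power)
  then have m2: "m \<ge> 2" using mk by linarith
  have "c * heavy_term c k m
      \<le> exp (c - 1) * (exp (real m / 2) * (exp (4 * real k + 4)
          * exp (real (2 * k + 1) * (c - 1)) * exp (27 * c - 3 * (real m - 2))))"
    unfolding heavy_term_def
  proof (intro mult_mono)
    show "c \<le> exp (c - 1)" using power_le_exp_pred[of c 1] c by simp
    show "real ((1 + m) ^ (2 * k + 2)) \<le> exp (real m / 2)" by (rule power_le_exp_half[OF k mk])
    show "2 * real (2 * k + 1 + 1) \<le> exp (4 * real k + 4)"
      using exp_ge_add_one_self[of "4 * real k + 4"] by simp
    show "c ^ (2 * k + 1) \<le> exp (real (2 * k + 1) * (c - 1))"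
      by (rule power_le_exp_pred) (use c in simp)
    show "c ^ (m - 2) / fact (m - 2) \<le> exp (27 * c - 3 * (real m - 2))"
      using power_div_fact_le_exp[of c "m - 2"] c m2 by (simp add: of_nat_diff)
  qed (use c in \<open>auto simp: zero_le_mult_iff\<close>)
  also have "\<dots> = exp ((c - 1) + real m / 2 + (4 * real k + 4) + real (2 * k + 1) * (c - 1)
      + (27 * c - 3 * (real m - 2)))"
    by (simp only: exp_add mult.assoc)
  also have "\<dots> \<le> exp (- (c\<^sup>2 * (real k)\<^sup>2) - real (m + 1))"
    using heavy_exponent_le[OF k c m] by simp
  also have "\<dots> = exp (- (c\<^sup>2 * (real k)\<^sup>2)) * exp (- real (m + 1))"
    by (simp add: exp_add[symmetric])
  also have "\<dots> \<le> exp (- (c\<^sup>2 * (real k)\<^sup>2)) * (1 / 2) ^ (m + 1)"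
    by (rule mult_left_mono[OF exp_neg_le_half_power]) simp
  finally show ?thesis .
qed

lemma sum_half_powers_le_1: "(\<Sum>m<N. (1 / 2::real) ^ (m + 1)) \<le> 1"
proof -
  have "(\<Sum>m<N. (1 / 2::real) ^ (m + 1)) = 1 - (1 / 2) ^ N"
    by (induction N) (auto simp: power_Suc algebra_simps)
  then show ?thesis by simp
qed

section \<open>The variance bound\<close>

text \<open>Degrees up to this cutoff keep \<open>k\<close>-balls below the truncation size \<open>t_k\<close>
  (\<open>degree_cutoff_power_le_t_k\<close>), while degrees beyond it are so unlikely that they contribute
  less than \<open>exp (- c\<^sup>2 k\<^sup>2)\<close> per vertex (\<open>heavy_tail_le\<close>).\<close>
definition degree_cutoff :: "real \<Rightarrow> nat \<Rightarrow> nat" where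
  "degree_cutoff c k = nat \<lfloor>100 * c\<^sup>2 * (real k)\<^sup>2\<rfloor> - 1"

lemma degree_cutoff_bounds:
  assumes "c \<ge> 1" "k \<ge> 1"
  shows "100 * c\<^sup>2 * (real k)\<^sup>2 - 1 \<le> real (degree_cutoff c k + 1)"
    and "real (degree_cutoff c k + 1) \<le> 100 * c\<^sup>2 * (real k)\<^sup>2"
    and "2 \<le> degree_cutoff c k + 1"
proof -
  define x where "x = 100 * c\<^sup>2 * (real k)\<^sup>2"
  have "1 \<le> c\<^sup>2" "1 \<le> (real k)\<^sup>2" using assms by (simp_all add: one_le_power)
  then have "1 \<le> c\<^sup>2 * (real k)\<^sup>2" using mult_mono[of 1 "c\<^sup>2" 1 "(real k)\<^sup>2"] by simp
  then have x: "100 \<le> x" unfolding x_def by simp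
  then have "real (degree_cutoff c k + 1) = of_int \<lfloor>x\<rfloor>"
    unfolding degree_cutoff_def x_def[symmetric] by (simp add: Suc_nat_eq_nat_zadd1 le_nat_iff)
  then show "x - 1 \<le> real (degree_cutoff c k + 1)" "real (degree_cutoff c k + 1) \<le> x"
    "2 \<le> degree_cutoff c k + 1"
    using x by linarith+
qed

lemma degree_cutoff_power_le_t_k:
  assumes "c \<ge> 1" "k \<ge> 1"
  shows "real ((1 + degree_cutoff c k) ^ k) \<le> t_k c k"
proof -
  have "real ((1 + degree_cutoff c k) ^ k) \<le> (100 * c\<^sup>2 * (real k)\<^sup>2) ^ k"
    using degree_cutoff_bounds(2)[OF assms] by (simp add: power_mono)
  also have "\<dots> = t_k c k"
    unfolding t_k_def power_mult by (simp add: power_mult_distrib)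
  finally show ?thesis .
qed

lemma heavy_tail_le:
  assumes k: "k \<ge> 100" and c: "c > 1"
  shows "c * (\<Sum>m\<in>{degree_cutoff c k + 1..n}. heavy_term c k m) \<le> exp (- (c\<^sup>2 * (real k)\<^sup>2))"
proof -
  let ?e = "exp (- (c\<^sup>2 * (real k)\<^sup>2))"
  have "c * (\<Sum>m\<in>{degree_cutoff c k + 1..n}. heavy_term c k m)
      \<le> (\<Sum>m\<in>{degree_cutoff c k + 1..n}. ?e * (1 / 2) ^ (m + 1))"
    unfolding sum_distrib_left
  proof (rule sum_mono)
    fix m assume "m \<in> {degree_cutoff c k + 1..n}"
    then have "100 * c\<^sup>2 * (real k)\<^sup>2 - 1 \<le> real m"
      using degree_cutoff_bounds(1)[of c k] c k by simp
    then show "c * heavy_term c k m \<le> ?e * (1 / 2) ^ (m + 1)" by (rule heavy_term_le[OF k c])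
  qed
  also have "\<dots> \<le> (\<Sum>m<n + 1. ?e * (1 / 2) ^ (m + 1))"
    by (rule sum_mono2) auto
  also have "\<dots> = ?e * (\<Sum>m<n + 1. (1 / 2) ^ (m + 1))"
    by (rule sum_distrib_left[symmetric])
  also have "\<dots> \<le> ?e * 1"
    by (rule mult_left_mono[OF sum_half_powers_le_1]) simp
  finally show ?thesis by simp
qed

definition lollipop_constant :: "real \<Rightarrow> nat \<Rightarrow> real" where
  "lollipop_constant c k = real ((1 + degree_cutoff c k) ^ (2 * k + 2))
     * (\<Sum>t<2 * k + 1 + (1 + degree_cutoff c k) ^ (2 * k + 1). real t * (c ^ (t + 1) + real t * c ^ t))"

lemma lollipop_constant_nonneg: "c \<ge> 0 \<Longrightarrow> lollipop_constant c k \<ge> 0"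
  unfolding lollipop_constant_def by (intro mult_nonneg_nonneg sum_nonneg) auto

lemma edge_influence_le:
  assumes k: "k \<ge> 1" and c: "c \<ge> 1" and \<beta>: "weight_fun \<beta>" and n: "c < real n"
    and i: "i \<in> all_pairs n"
  defines "f \<equiv> \<lambda>E. Mtilde k \<beta> n E - Mhat k c \<beta> n E"
  shows "expect_subset (all_pairs n) (c / real n) (\<lambda>S. (f (insert i S) - f (S - {i}))\<^sup>2)
    \<le> lollipop_constant c k / real n + (\<Sum>m\<in>{degree_cutoff c k + 1..n}. heavy_term c k m)"
proof -
  let ?A = "all_pairs n" and ?p = "c / real n" and ?m0 = "degree_cutoff c k"
  let ?L = "2 * k + 1 + (1 + ?m0) ^ (2 * k + 1)"
  obtain a b where ab: "i = {a, b}" "a < b" "b < n" using i unfolding all_pairs_def by auto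
  let ?lollipop = "\<lambda>S. has_lollipop n (insert {a, b} S) a ?L"
  let ?heavy = "\<lambda>m S. has_heavy_vertex n (insert {a, b} S) a (2 * k + 1) m"
  have n1: "n \<ge> 1" using n c by linarith
  have p0: "0 \<le> ?p" and p1: "?p \<le> 1" using n c by auto
  have "expect_subset ?A ?p (\<lambda>S. (f (insert i S) - f (S - {i}))\<^sup>2)
     \<le> expect_subset ?A ?p (\<lambda>S. real ((1 + ?m0) ^ (2 * k + 2)) * of_bool (?lollipop S)
          + (\<Sum>m\<in>{?m0 + 1..n}. real ((1 + m) ^ (2 * k + 2)) * of_bool (?heavy m S)))"
  proof (rule expect_subset_mono[OF p0 p1])
    fix S assume "S \<subseteq> ?A"
    then show "(f (insert i S) - f (S - {i}))\<^sup>2 \<le> real ((1 + ?m0) ^ (2 * k + 2)) * of_bool (?lollipop S)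
          + (\<Sum>m\<in>{?m0 + 1..n}. real ((1 + m) ^ (2 * k + 2)) * of_bool (?heavy m S))"
      unfolding f_def Mtilde_minus_Mhat ab(1)
      by (rule edge_diff_sq_le[OF _ ab(2,3) \<beta> degree_cutoff_power_le_t_k[OF c k]])
  qed
  also have "\<dots> = real ((1 + ?m0) ^ (2 * k + 2)) * expect_subset ?A ?p (\<lambda>S. of_bool (?lollipop S))
      + (\<Sum>m\<in>{?m0 + 1..n}. real ((1 + m) ^ (2 * k + 2))
          * expect_subset ?A ?p (\<lambda>S. of_bool (?heavy m S)))"
    by (simp only: expect_subset_add expect_subset_cmult expect_subset_sum[OF finite_atLeastAtMost])
  also have "\<dots> \<le> lollipop_constant c k / real n + (\<Sum>m\<in>{?m0 + 1..n}. heavy_term c k m)"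
    unfolding lollipop_constant_def heavy_term_def times_divide_eq_right[symmetric]
  proof (intro add_mono mult_left_mono sum_mono)
    show "expect_subset ?A ?p (\<lambda>S. of_bool (?lollipop S))
        \<le> (\<Sum>t<?L. real t * (c ^ (t + 1) + real t * c ^ t)) / real n"
      by (rule prob_lollipop_le[OF n1 p0 p1 ab(2,3)])
    fix m assume "m \<in> {?m0 + 1..n}"
    then have "m \<ge> 2" using degree_cutoff_bounds(3)[OF c k] by simp
    then show "expect_subset ?A ?p (\<lambda>S. of_bool (?heavy m S))
        \<le> 2 * real (2 * k + 1 + 1) * c ^ (2 * k + 1) * (c ^ (m - 2) / fact (m - 2))"
      by (rule prob_heavy_vertex_insert_le[OF c n1 p1 ab(2,3)])
  qed simp_all
  finally show ?thesis .
qed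

lemma variance_gnp_le_uniform:
  assumes c: "0 < c" "c \<le> real n" and B: "0 \<le> B"
    and infl: "\<And>i. i \<in> all_pairs n \<Longrightarrow>
      expect_subset (all_pairs n) (c / real n) (\<lambda>S. (f (insert i S) - f (S - {i}))\<^sup>2) \<le> B"
  shows "measure_pmf.variance (gnp n (c / real n)) f \<le> c * real n * B"
proof -
  let ?p = "c / real n"
  let ?infl = "\<lambda>i. expect_subset (all_pairs n) ?p (\<lambda>S. (f (insert i S) - f (S - {i}))\<^sup>2)"
  have p: "0 \<le> ?p" "?p \<le> 1" using c by auto
  have "measure_pmf.variance (gnp n ?p) f \<le> ?p * (1 - ?p) * (\<Sum>i\<in>all_pairs n. ?infl i)"
    by (rule variance_gnp_le[OF p])
  also have "\<dots> \<le> ?p * (\<Sum>i\<in>all_pairs n. ?infl i)"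
    using p by (intro mult_right_mono sum_nonneg expect_subset_nonneg) (auto simp: algebra_simps)
  also have "\<dots> \<le> ?p * (\<Sum>i\<in>all_pairs n. B)"
    using p by (intro mult_left_mono sum_mono infl) auto
  also have "\<dots> \<le> ?p * (real n * real n * B)"
  proof -
    have "real (card (all_pairs n)) \<le> real n * real n"
      using card_all_pairs[of n] by (metis of_nat_le_iff of_nat_mult)
    then have "(\<Sum>i\<in>all_pairs n. B) \<le> real n * real n * B"
      using B by (simp add: mult_right_mono)
    then show ?thesis using p(1) by (rule mult_left_mono)
  qed
  also have "\<dots> = c * real n * B" using c by (simp add: field_simps)
  finally show ?thesis .
qed

theorem lemma5p2:
  fixes k :: nat and c :: real and \<beta> :: "nat set \<Rightarrow> nat set set \<Rightarrow> nat \<Rightarrow> real"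
  assumes "k \<ge> 100" and "c > 1" and "weight_fun \<beta>"
  shows "\<exists>C. \<exists>N. \<forall>n\<ge>N.
           measure_pmf.variance (gnp n (c / real n)) (\<lambda>E. Mtilde k \<beta> n E - Mhat k c \<beta> n E)
             \<le> real n * exp (- (c\<^sup>2 * (real k)\<^sup>2)) + C"
proof (intro exI allI impI)
  fix n assume "nat \<lceil>c\<rceil> + 1 \<le> n"
  then have n: "c < real n" by linarith
  have k: "k \<ge> 1" and c: "c \<ge> 1" using assms(1,2) by simp_all
  define T where "T = (\<Sum>m\<in>{degree_cutoff c k + 1..n}. heavy_term c k m)"
  have "measure_pmf.variance (gnp n (c / real n)) (\<lambda>E. Mtilde k \<beta> n E - Mhat k c \<beta> n E)
      \<le> c * real n * (lollipop_constant c k / real n + T)"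
  proof (rule variance_gnp_le_uniform)
    show "0 \<le> lollipop_constant c k / real n + T"
      unfolding T_def heavy_term_def using c lollipop_constant_nonneg[of c k]
      by (intro add_nonneg_nonneg divide_nonneg_nonneg sum_nonneg) auto
  qed (use n c edge_influence_le[OF k c assms(3) n] T_def in auto)
  also have "\<dots> = c * lollipop_constant c k + real n * (c * T)"
    using n assms(2) by (simp add: field_simps)
  also have "\<dots> \<le> c * lollipop_constant c k + real n * exp (- (c\<^sup>2 * (real k)\<^sup>2))"
    using heavy_tail_le[OF assms(1,2), of n] unfolding T_def by (simp add: mult_left_mono)
  finally show "measure_pmf.variance (gnp n (c / real n)) (\<lambda>E. Mtilde k \<beta> n E - Mhat k c \<beta> n E)
      \<le> real n * exp (- (c\<^sup>2 * (real k)\<^sup>2)) + c * lollipop_constant c k"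
    by simp
qed

end
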